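(* Assume $\Delta=0$. Let $\mathcal O$ be a $\delta$-subring of $R$, $\alpha\in\mathfrak{gl}_n(\mathcal O)$, $u\in GL_n(R)$ with $\delta u=\alpha u^{(p)}$, and set $N_{u/\mathcal O}=N^\delta\cap\Sigma^0_{u/\mathcal O}$. 1) If the entries of one of the rows of $u$ are algebraically independent over $\mathcal O$, then $G_{u/\mathcal O}\subset N^\delta$, hence $G_{u/\mathcal O}=N_{u/\mathcal O}$. 2) If the entries of $u$ are algebraically independent over $\mathcal O$, then $G_{u/\mathcal O}=N^\delta\cap GL_n(\mathcal O)$. 3) If $\sigma$ is an $\mathcal O$-algebra automorphism of $\mathcal O[u]$ such that $\sigma(u)=uc$ with $c\in GL_n(\mathcal O)\cap G_u$, then $c\in G_{u/\mathcal O}$. 4) If $n=1$, then $G_{u/\mathcal O}\subset N^\delta=G^\delta$. 5) $\bigcap_{w\in GL_n(R)}G_w=N^\delta$.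
   Context: Let $p$ be an odd prime, $R$ the unique complete discrete valuation ring with maximal ideal $pR$ and residue field an algebraic closure of $\mathbb F_p$; $\phi$ the unique lift of Frobenius, $\delta a=(\phi(a)-a^p)/p$; on matrices $\phi,\delta$ act entrywise, $u^{(p)}=(u_{ij}^p)$. A $\delta$-subring is a subring of $R$ closed under $\delta$. $\mathcal O[u]$ is the subring generated by $\mathcal O$ and the entries of $u$. For $\Delta=0$ and $w\in GL_n(R)$, $G_w=\{v\in GL_n(R):(wv)^{(p)}=w^{(p)}\phi(v)\}$. $\mathcal O\{u\}$: subring generated by $\mathcal O$ and entries of $u,\delta u,\ldots$; $\tilde G_{u/\mathcal O}$: $\mathcal O$-algebra automorphisms $\sigma$ of $\mathcal O\{u\}$ commuting with $\delta$ with $u^{-1}\sigma(u)\in GL_n(\mathcal O)$; $G_{u/\mathcal O}$: image of $\sigma\mapsto u^{-1}\sigma(u)$ in $GL_n(\mathcal O)$. $I^0_{u/\mathcal O}$: kernel of $\mathcal O[x]\to R$, $x\mapsto u$ ($x$ an $n\times n$ matrix of indeterminates); $\Sigma^0_{u/\mathcal O}$: the set of $c\in GL_n(\mathcal O)$ such that the $\mathcal O$-automorphism $\sigma^0_c$ of $\mathcal O[x]$ with $\sigma^0_c(x)=xc$ satisfies $\sigma^0_c(I^0_{u/\mathcal O})=I^0_{u/\mathcal O}$. $R^\delta=\{\lambda:\delta\lambda=0\}$; $G^\delta$: elements of $GL_n(R)$ with all entries in $R^\delta$; $T$: diagonal matrices, $W$: permutation matrices, $N=WT$, $N^\delta=N\cap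 G^\delta$. *)

theory Defs
  imports "HOL-Analysis.Analysis" "HOL-Library.Poly_Mapping"
    "HOL-Computational_Algebra.Polynomial"
begin

text \<open>witt_frame p phi holds for a type 'a iff 'a is a complete discrete valuation ring
  with maximal ideal pR, residue field algebraically closed and algebraic over F_p
  (i.e. an algebraic closure of F_p), p an odd prime, and phi a ring endomorphism
  lifting Frobenius (phi a = a^p mod p).  These data determine R and phi uniquely.\<close>

definition witt_frame :: "nat \<Rightarrow> ('a::idom \<Rightarrow> 'a) \<Rightarrow> bool" where
  "witt_frame p \<phi> \<longleftrightarrow>
     prime p \<and> odd p
   \<and> (of_nat p :: 'a) \<noteq> 0 \<and> \<not> (of_nat p :: 'a) dvd 1
   \<and> (\<forall>a::'a. a \<noteq> 0 \<longrightarrow> (\<exists>k v. v dvd 1 \<and> a = of_nat p ^ k * v))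
   \<and> (\<forall>x::nat \<Rightarrow> 'a. (\<forall>k. of_nat p ^ k dvd x (Suc k) - x k)
         \<longrightarrow> (\<exists>y. \<forall>k. of_nat p ^ k dvd y - x k))
   \<and> (\<forall>f::'a poly. degree f \<ge> 1 \<and> lead_coeff f = 1 \<longrightarrow> (\<exists>a. of_nat p dvd poly f a))
   \<and> (\<forall>a::'a. \<exists>f::int poly. (\<exists>i. \<not> int p dvd coeff f i)
         \<and> of_nat p dvd poly (map_poly of_int f) a)
   \<and> \<phi> 1 = 1 \<and> (\<forall>a b. \<phi> (a + b) = \<phi> a + \<phi> b) \<and> (\<forall>a b. \<phi> (a * b) = \<phi> a * \<phi> b)
   \<and> (\<forall>a. of_nat p dvd \<phi> a - a ^ p)"

definition delta :: "nat \<Rightarrow> ('a::idom \<Rightarrow> 'a) \<Rightarrow> 'a \<Rightarrow> 'a" where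
  "delta p \<phi> a = (THE b. of_nat p * b = \<phi> a - a ^ p)"

definition is_subring :: "'a::comm_ring_1 set \<Rightarrow> bool" where
  "is_subring A \<longleftrightarrow> 0 \<in> A \<and> 1 \<in> A \<and> (\<forall>a\<in>A. \<forall>b\<in>A. a + b \<in> A \<and> a * b \<in> A \<and> - a \<in> A)"

definition delta_subring :: "nat \<Rightarrow> ('a::idom \<Rightarrow> 'a) \<Rightarrow> 'a set \<Rightarrow> bool" where
  "delta_subring p \<phi> \<O> \<longleftrightarrow> is_subring \<O> \<and> (\<forall>a\<in>\<O>. delta p \<phi> a \<in> \<O>)"

definition ring_gen :: "'a::comm_ring_1 set \<Rightarrow> 'a set \<Rightarrow> 'a set" where
  "ring_gen \<O> S = \<Inter>{A. is_subring A \<and> \<O> \<subseteq> A \<and> S \<subseteq> A}"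

definition mat_map :: "('a \<Rightarrow> 'b) \<Rightarrow> 'a^'n^'m \<Rightarrow> 'b^'n^'m" where
  "mat_map f A = (\<chi> i j. f (A $ i $ j))"

definition frob_pow :: "nat \<Rightarrow> 'a::comm_ring_1^'n^'m \<Rightarrow> 'a^'n^'m" where
  "frob_pow p A = mat_map (\<lambda>x. x ^ p) A"

definition entries :: "'a^'n^'m \<Rightarrow> 'a set" where
  "entries A = {A $ i $ j | i j. True}"

definition in_GL :: "'a::comm_ring_1 set \<Rightarrow> 'a^'n^'n \<Rightarrow> bool" where
  "in_GL \<O> A \<longleftrightarrow> (\<forall>i j. A $ i $ j \<in> \<O>)
     \<and> (\<exists>B. (\<forall>i j. B $ i $ j \<in> \<O>) \<and> A ** B = mat 1 \<and> B ** A = mat 1)"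

definition Gw :: "nat \<Rightarrow> ('a::idom \<Rightarrow> 'a) \<Rightarrow> 'a^'n^'n \<Rightarrow> ('a^'n^'n) set" where
  "Gw p \<phi> w = {v. in_GL UNIV v \<and> frob_pow p (w ** v) = frob_pow p w ** mat_map \<phi> v}"

definition Gdelta :: "nat \<Rightarrow> ('a::idom \<Rightarrow> 'a) \<Rightarrow> ('a^'n^'n) set" where
  "Gdelta p \<phi> = {v. in_GL UNIV v \<and> (\<forall>i j. delta p \<phi> (v $ i $ j) = 0)}"

definition is_perm_mat :: "'a::comm_ring_1^'n^'n \<Rightarrow> bool" where
  "is_perm_mat W \<longleftrightarrow> (\<exists>\<pi>. \<pi> permutes (UNIV :: 'n set)
      \<and> W = (\<chi> i j. if \<pi> i = j then 1 else 0))"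

definition is_diag :: "'a::comm_ring_1^'n^'n \<Rightarrow> bool" where
  "is_diag T \<longleftrightarrow> (\<forall>i j. i \<noteq> j \<longrightarrow> T $ i $ j = 0)"

definition Nmon :: "('a::comm_ring_1^'n^'n) set" where
  "Nmon = {W ** T | W T. is_perm_mat W \<and> is_diag T \<and> in_GL UNIV T}"

definition Ndelta :: "nat \<Rightarrow> ('a::idom \<Rightarrow> 'a) \<Rightarrow> ('a^'n^'n) set" where
  "Ndelta p \<phi> = Nmon \<inter> Gdelta p \<phi>"

type_synonym ('v, 'a) mpoly = "('v \<Rightarrow>\<^sub>0 nat) \<Rightarrow>\<^sub>0 'a"

definition mpeval :: "('v, 'a::comm_ring_1) mpoly \<Rightarrow> ('v \<Rightarrow> 'a) \<Rightarrow> 'a" where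
  "mpeval F x = (\<Sum>m\<in>Poly_Mapping.keys F. Poly_Mapping.lookup F m * (\<Prod>v\<in>Poly_Mapping.keys m. x v ^ Poly_Mapping.lookup m v))"

definition mp_over :: "'a::comm_ring_1 set \<Rightarrow> ('v, 'a) mpoly \<Rightarrow> bool" where
  "mp_over \<O> F \<longleftrightarrow> (\<forall>m. Poly_Mapping.lookup F m \<in> \<O>)"

definition mpX :: "'v \<Rightarrow> ('v, 'a::comm_ring_1) mpoly" where
  "mpX v = Poly_Mapping.single (Poly_Mapping.single v 1) 1"

definition mpC :: "'a::comm_ring_1 \<Rightarrow> ('v, 'a) mpoly" where
  "mpC a = Poly_Mapping.single 0 a"

definition mpsubst :: "('v \<Rightarrow> ('w, 'a::comm_ring_1) mpoly) \<Rightarrow> ('v, 'a) mpoly \<Rightarrow> ('w, 'a) mpoly" where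
  "mpsubst s F = (\<Sum>m\<in>Poly_Mapping.keys F. mpC (Poly_Mapping.lookup F m) * (\<Prod>v\<in>Poly_Mapping.keys m. s v ^ Poly_Mapping.lookup m v))"

text \<open>sigma^0_c: x \<mapsto> x c on \<O>[x], x = (x_ij) an n x n matrix of indeterminates\<close>
definition sigma0 :: "'a::comm_ring_1^'n^'n \<Rightarrow> ('n \<times> 'n, 'a) mpoly \<Rightarrow> ('n \<times> 'n, 'a) mpoly" where
  "sigma0 c = mpsubst (\<lambda>(i, j). \<Sum>k\<in>UNIV. mpX (i, k) * mpC (c $ k $ j))"

definition I0 :: "'a::comm_ring_1 set \<Rightarrow> 'a^'n^'n \<Rightarrow> ('n \<times> 'n, 'a) mpoly set" where
  "I0 \<O> u = {F. mp_over \<O> F \<and> mpeval F (\<lambda>(i, j). u $ i $ j) = 0}"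

definition Sigma0 :: "'a::comm_ring_1 set \<Rightarrow> 'a^'n^'n \<Rightarrow> ('a^'n^'n) set" where
  "Sigma0 \<O> u = {c. in_GL \<O> c \<and> sigma0 c ` I0 \<O> u = I0 \<O> u}"

definition alg_indep :: "'a::comm_ring_1 set \<Rightarrow> ('v \<Rightarrow> 'a) \<Rightarrow> bool" where
  "alg_indep \<O> x \<longleftrightarrow> (\<forall>F::('v, 'a) mpoly. mp_over \<O> F \<and> mpeval F x = 0 \<longrightarrow> F = 0)"

definition delta_gen :: "nat \<Rightarrow> ('a::idom \<Rightarrow> 'a) \<Rightarrow> 'a set \<Rightarrow> 'a^'n^'n \<Rightarrow> 'a set" where
  "delta_gen p \<phi> \<O> u = ring_gen \<O> (\<Union>k. entries (mat_map (delta p \<phi> ^^ k) u))"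

definition O_alg_aut :: "'a::comm_ring_1 set \<Rightarrow> 'a set \<Rightarrow> ('a \<Rightarrow> 'a) \<Rightarrow> bool" where
  "O_alg_aut \<O> A \<sigma> \<longleftrightarrow> bij_betw \<sigma> A A
     \<and> (\<forall>a\<in>A. \<forall>b\<in>A. \<sigma> (a + b) = \<sigma> a + \<sigma> b \<and> \<sigma> (a * b) = \<sigma> a * \<sigma> b)
     \<and> (\<forall>a\<in>\<O>. \<sigma> a = a)"

text \<open>tilde G_{u/\<O>}; sigma(u) = u c with c in GL_n(\<O>) expresses u^{-1} sigma(u) in GL_n(\<O>)\<close>
definition Gtilde :: "nat \<Rightarrow> ('a::idom \<Rightarrow> 'a) \<Rightarrow> 'a set \<Rightarrow> 'a^'n^'n \<Rightarrow> ('a \<Rightarrow> 'a) set" where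
  "Gtilde p \<phi> \<O> u = {\<sigma>. O_alg_aut \<O> (delta_gen p \<phi> \<O> u) \<sigma>
      \<and> (\<forall>a\<in>delta_gen p \<phi> \<O> u. \<sigma> (delta p \<phi> a) = delta p \<phi> (\<sigma> a))
      \<and> (\<exists>c. in_GL \<O> c \<and> mat_map \<sigma> u = u ** c)}"

definition Grel :: "nat \<Rightarrow> ('a::idom \<Rightarrow> 'a) \<Rightarrow> 'a set \<Rightarrow> 'a^'n^'n \<Rightarrow> ('a^'n^'n) set" where
  "Grel p \<phi> \<O> u = {c. \<exists>\<sigma>\<in>Gtilde p \<phi> \<O> u. mat_map \<sigma> u = u ** c}"

end

theory Submission
  imports Defs
begin

text \<open>
  From \<delta>u = \<alpha> u^(p) one gets \<phi>(u) = u^(p) + p\<alpha> u^(p), so O[u] is closed under \<delta> and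
  O{u} = O[u]. For an automorphism \<sigma> with \<sigma>(u) = u c, commuting with \<phi> on O[u] is, on the
  generators, the identity (u c)^(p) = u^(p) \<phi>(c) defining c \<in> G_u: one direction because
  (u c)^(p) and u^(p) \<phi>(c) both solve \<phi>(u c) = V + p\<alpha> V, whose solution is unique as
  R is p-adically separated; the other because the homomorphisms \<sigma>\<phi> and \<phi>\<sigma> agree on
  generators. This gives 3), and with the description of \<Sigma>^0 as the c for which u \<mapsto> u c
  extends to an automorphism of O[u], the equality in 1).

  The remaining statements rest on one criterion: if (\<Sum>_k t_k c_kj)^p = \<Sum>_k t_k^p \<phi>(c_kj)
  for all vectors t with at most two nonzero entries, then \<phi>(c) = c^(p) and
  (x + l y)^p = x^p + l^p y^p for any two entries x, y of a column of c and all l; comparing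
  linear coefficients of this polynomial identity in l gives p x^(p-1) y = 0, so every
  column has a single nonzero entry and c \<in> N^\<delta>. For 5) the identity comes from
  w = 1 and elementary matrices w; for 1) and 2) it holds for t a row of u, hence as a
  polynomial identity when that row is algebraically independent.
\<close>

lemma subring_zero: "is_subring A \<Longrightarrow> 0 \<in> A" by (simp add: is_subring_def)
lemma subring_one: "is_subring A \<Longrightarrow> 1 \<in> A" by (simp add: is_subring_def)
lemma subring_add: "is_subring A \<Longrightarrow> a \<in> A \<Longrightarrow> b \<in> A \<Longrightarrow> a + b \<in> A" by (simp add: is_subring_def)
lemma subring_mult: "is_subring A \<Longrightarrow> a \<in> A \<Longrightarrow> b \<in> A \<Longrightarrow> a * b \<in> A" by (simp add: is_subring_def)
lemma subring_uminus: "is_subring A \<Longrightarrow> a \<in> A \<Longrightarrow> - a \<in> A" by (simp add: is_subring_def)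

lemma subring_diff: "is_subring A \<Longrightarrow> a \<in> A \<Longrightarrow> b \<in> A \<Longrightarrow> a - b \<in> A"
  using subring_add[of A a "- b"] subring_uminus[of A b] by simp

lemma subring_sum: "is_subring A \<Longrightarrow> (\<And>i. i \<in> S \<Longrightarrow> f i \<in> A) \<Longrightarrow> sum f S \<in> A"
  by (induction S rule: infinite_finite_induct) (simp_all add: subring_zero subring_add)

lemma subring_prod: "is_subring A \<Longrightarrow> (\<And>i. i \<in> S \<Longrightarrow> f i \<in> A) \<Longrightarrow> prod f S \<in> A"
  by (induction S rule: infinite_finite_induct) (simp_all add: subring_one subring_mult)

lemma subring_power: "is_subring A \<Longrightarrow> a \<in> A \<Longrightarrow> a ^ n \<in> A"
  by (induction n) (simp_all add: subring_one subring_mult)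

lemma subring_of_nat: "is_subring A \<Longrightarrow> of_nat n \<in> A"
  by (induction n) (simp_all add: subring_zero subring_one subring_add)

lemma subring_UNIV: "is_subring UNIV" by (simp add: is_subring_def)

lemma subring_ring_gen: "is_subring (ring_gen \<O> S)"
  unfolding ring_gen_def is_subring_def by auto

lemma ring_gen_base_subset: "\<O> \<subseteq> ring_gen \<O> S"
  unfolding ring_gen_def by auto

lemma ring_gen_gens_subset: "S \<subseteq> ring_gen \<O> S"
  unfolding ring_gen_def by auto

lemma ring_gen_least: "is_subring A \<Longrightarrow> \<O> \<subseteq> A \<Longrightarrow> S \<subseteq> A \<Longrightarrow> ring_gen \<O> S \<subseteq> A"
  unfolding ring_gen_def by auto

definition hom_on :: "'a::comm_ring_1 set \<Rightarrow> ('a \<Rightarrow> 'a) \<Rightarrow> bool" where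
  "hom_on A s \<longleftrightarrow> (\<forall>a\<in>A. \<forall>b\<in>A. s (a + b) = s a + s b \<and> s (a * b) = s a * s b)"

lemma hom_on_add: "hom_on A s \<Longrightarrow> a \<in> A \<Longrightarrow> b \<in> A \<Longrightarrow> s (a + b) = s a + s b"
  by (simp add: hom_on_def)

lemma hom_on_mult: "hom_on A s \<Longrightarrow> a \<in> A \<Longrightarrow> b \<in> A \<Longrightarrow> s (a * b) = s a * s b"
  by (simp add: hom_on_def)

lemma hom_on_zero: "hom_on A s \<Longrightarrow> is_subring A \<Longrightarrow> s 0 = 0"
  using hom_on_add[of A s 0 0] subring_zero[of A] by simp

lemma hom_on_uminus: "hom_on A s \<Longrightarrow> is_subring A \<Longrightarrow> a \<in> A \<Longrightarrow> s (- a) = - s a"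
  using hom_on_add[of A s a "- a"] hom_on_zero[of A s] subring_uminus[of A a]
  by (simp add: eq_neg_iff_add_eq_0 add.commute)

lemma hom_on_diff: "hom_on A s \<Longrightarrow> is_subring A \<Longrightarrow> a \<in> A \<Longrightarrow> b \<in> A \<Longrightarrow> s (a - b) = s a - s b"
  using hom_on_add[of A s a "- b"] hom_on_uminus[of A s b] subring_uminus[of A b] by simp

lemma hom_on_sum:
  "hom_on A s \<Longrightarrow> is_subring A \<Longrightarrow> (\<And>i. i \<in> S \<Longrightarrow> f i \<in> A) \<Longrightarrow> s (sum f S) = (\<Sum>i\<in>S. s (f i))"
  by (induction S rule: infinite_finite_induct) (simp_all add: hom_on_zero hom_on_add subring_sum)

lemma hom_on_prod:
  "hom_on A s \<Longrightarrow> is_subring A \<Longrightarrow> s 1 = 1 \<Longrightarrow> (\<And>i. i \<in> S \<Longrightarrow> f i \<in> A)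
    \<Longrightarrow> s (prod f S) = (\<Prod>i\<in>S. s (f i))"
  by (induction S rule: infinite_finite_induct) (simp_all add: hom_on_mult subring_prod)

lemma hom_on_power: "hom_on A s \<Longrightarrow> is_subring A \<Longrightarrow> s 1 = 1 \<Longrightarrow> a \<in> A \<Longrightarrow> s (a ^ n) = s a ^ n"
  by (induction n) (simp_all add: hom_on_mult subring_power)

lemma hom_on_comp:
  "hom_on A f \<Longrightarrow> hom_on A g \<Longrightarrow> g ` A \<subseteq> A \<Longrightarrow> hom_on A (f \<circ> g)"
  by (auto simp: hom_on_def image_subset_iff)

lemma hom_on_ring_gen_eqI:
  assumes f: "hom_on (ring_gen \<O> S) f" and g: "hom_on (ring_gen \<O> S) g"
    and agree: "\<And>x. x \<in> \<O> \<union> S \<Longrightarrow> f x = g x" and "1 \<in> \<O>"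
    and x: "x \<in> ring_gen \<O> S"
  shows "f x = g x"
proof -
  let ?A = "ring_gen \<O> S"
  have sr: "is_subring ?A" by (rule subring_ring_gen)
  have "is_subring {x \<in> ?A. f x = g x}"
    unfolding is_subring_def
    using agree[of 1] \<open>1 \<in> \<O>\<close> sr subring_one[OF sr]
    by (auto simp: hom_on_zero[OF f sr] hom_on_zero[OF g sr] hom_on_add[OF f] hom_on_add[OF g]
        hom_on_mult[OF f] hom_on_mult[OF g] hom_on_uminus[OF f sr] hom_on_uminus[OF g sr]
        subring_zero subring_add subring_mult subring_uminus)
  moreover have "\<O> \<subseteq> ?A" "S \<subseteq> ?A" by (simp_all add: ring_gen_base_subset ring_gen_gens_subset)
  ultimately have "?A \<subseteq> {x \<in> ?A. f x = g x}"
    using agree by (intro ring_gen_least) auto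
  then show ?thesis using x by blast
qed

section \<open>The Frobenius lift and the p-derivation\<close>

lemma witt_frame_D:
  assumes "witt_frame p (\<phi> :: 'a::idom \<Rightarrow> 'a)"
  shows witt_frame_prime: "prime p" and witt_frame_odd: "odd p"
    and witt_frame_p_nonzero: "(of_nat p :: 'a) \<noteq> 0"
    and witt_frame_p_not_unit: "\<not> (of_nat p :: 'a) dvd 1"
    and witt_frame_phi_one: "\<phi> 1 = 1"
    and witt_frame_phi_add: "\<phi> (a + b) = \<phi> a + \<phi> b"
    and witt_frame_phi_mult: "\<phi> (a * b) = \<phi> a * \<phi> b"
    and witt_frame_phi_congruent: "of_nat p dvd \<phi> a - a ^ p"
    and witt_frame_valuation: "a \<noteq> 0 \<Longrightarrow> \<exists>k v. v dvd 1 \<and> a = of_nat p ^ k * v"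
  using assms by (simp_all add: witt_frame_def)

lemma witt_frame_p_gt_1: "witt_frame p \<phi> \<Longrightarrow> p > 1"
  using witt_frame_prime prime_gt_1_nat by metis

lemma witt_frame_hom_on: "witt_frame p \<phi> \<Longrightarrow> hom_on A \<phi>"
  unfolding hom_on_def using witt_frame_phi_add witt_frame_phi_mult by metis

lemma witt_frame_phi_zero: "witt_frame p \<phi> \<Longrightarrow> \<phi> 0 = 0"
  using hom_on_zero[OF witt_frame_hom_on subring_UNIV] .

lemma witt_frame_phi_uminus: "witt_frame p \<phi> \<Longrightarrow> \<phi> (- a) = - \<phi> a"
  using hom_on_uminus[OF witt_frame_hom_on subring_UNIV] by blast

lemma p_mult_delta:
  assumes "witt_frame p (\<phi> :: 'a::idom \<Rightarrow> 'a)"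
  shows "of_nat p * delta p \<phi> a = \<phi> a - a ^ p"
proof -
  obtain b where b: "\<phi> a - a ^ p = of_nat p * b"
    using witt_frame_phi_congruent[OF assms] by (auto elim: dvdE)
  have "(THE b. of_nat p * b = \<phi> a - a ^ p) = b"
    using b witt_frame_p_nonzero[OF assms] by (intro the_equality) auto
  then show ?thesis using b by (simp add: delta_def)
qed

lemma phi_eq_power_plus_delta: "witt_frame p \<phi> \<Longrightarrow> \<phi> a = a ^ p + of_nat p * delta p \<phi> a"
  using p_mult_delta[of p \<phi> a] by (simp add: algebra_simps)

lemma delta_eqI:
  assumes "witt_frame p (\<phi> :: 'a::idom \<Rightarrow> 'a)" "of_nat p * b = \<phi> a - a ^ p"
  shows "delta p \<phi> a = b"
proof -
  have "of_nat p * delta p \<phi> a = of_nat p * b" using p_mult_delta[OF assms(1), of a] assms(2) by simp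
  then show ?thesis using witt_frame_p_nonzero[OF assms(1)] by simp
qed

lemma delta_eq_0_iff:
  assumes "witt_frame p (\<phi> :: 'a::idom \<Rightarrow> 'a)"
  shows "delta p \<phi> a = 0 \<longleftrightarrow> \<phi> a = a ^ p"
  using p_mult_delta[OF assms, of a] witt_frame_p_nonzero[OF assms] by auto

lemma divisible_by_all_p_powers_eq_0:
  assumes w: "witt_frame p (\<phi> :: 'a::idom \<Rightarrow> 'a)" and dvd: "\<And>k. (of_nat p :: 'a) ^ k dvd y"
  shows "y = 0"
proof (rule ccontr)
  assume "y \<noteq> 0"
  with witt_frame_valuation[OF w] obtain k v where v: "v dvd 1" "y = of_nat p ^ k * v"
    by blast
  from dvd[of "Suc k"] have "(of_nat p :: 'a) ^ k * of_nat p dvd of_nat p ^ k * v"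
    using v by (metis power_Suc2)
  then have "of_nat p dvd v" using witt_frame_p_nonzero[OF w]
    by (subst (asm) dvd_mult_cancel_left) auto
  with v(1) witt_frame_p_not_unit[OF w] show False using dvd_trans by blast
qed

lemma power_inj_non_unit:
  fixes q :: "'a::idom"
  assumes "q \<noteq> 0" "\<not> q dvd 1"
  shows "inj (\<lambda>k::nat. q ^ k)"
proof -
  have le: "k \<le> m" if "q ^ k = q ^ m" for k m :: nat
  proof (rule ccontr)
    assume "\<not> k \<le> m"
    then obtain d where d: "k = m + Suc d" by (metis add_Suc_right less_imp_Suc_add not_le)
    have "q ^ m * q ^ Suc d = q ^ m * 1" using that unfolding d power_add by simp
    then have "q ^ Suc d = 1" using assms(1) by simp
    then have "q dvd 1" by (metis dvd_triv_left power_Suc)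
    with assms(2) show False by contradiction
  qed
  show ?thesis
  proof (rule injI)
    fix k m :: nat assume "q ^ k = q ^ m"
    then show "k = m" using le[of k m] le[of m k] by simp
  qed
qed

lemma witt_frame_infinite:
  assumes "witt_frame p (\<phi> :: 'a::idom \<Rightarrow> 'a)"
  shows "infinite (UNIV :: 'a set)"
proof
  assume "finite (UNIV :: 'a set)"
  then have "finite (range (\<lambda>k::nat. (of_nat p :: 'a) ^ k))" by (rule finite_subset[OF subset_UNIV])
  then have "finite (UNIV :: nat set)"
    by (rule finite_imageD[OF _ power_inj_non_unit[OF witt_frame_p_nonzero[OF assms]
          witt_frame_p_not_unit[OF assms]]])
  then show False by simp
qed

definition binomial_middle :: "nat \<Rightarrow> 'a::comm_ring_1 \<Rightarrow> 'a \<Rightarrow> 'a" where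
  "binomial_middle p a b = (\<Sum>k\<in>{1..<p}. of_nat ((p choose k) div p) * a ^ k * b ^ (p - k))"

lemma add_power_prime:
  assumes "prime p"
  shows "(a + b :: 'a::comm_ring_1) ^ p = a ^ p + b ^ p + of_nat p * binomial_middle p a b"
proof -
  have p0: "p > 0" using assms prime_gt_0_nat by blast
  have split: "{..p} = insert 0 (insert p {1..<p})" using p0 by auto
  have middle: "of_nat (p choose k) * a ^ k * b ^ (p - k)
      = of_nat p * (of_nat ((p choose k) div p) * a ^ k * b ^ (p - k))"
    if "k \<in> {1..<p}" for k
  proof -
    have "p dvd (p choose k)" using that assms by (intro dvd_choose_prime) auto
    then have "(of_nat (p choose k) :: 'a) = of_nat p * of_nat ((p choose k) div p)"
      by (metis dvd_mult_div_cancel of_nat_mult)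
    then show ?thesis by (simp add: mult.assoc)
  qed
  have "(a + b) ^ p = (\<Sum>k\<le>p. of_nat (p choose k) * a ^ k * b ^ (p - k))" by (rule binomial_ring)
  also have "\<dots> = b ^ p + (a ^ p + (\<Sum>k\<in>{1..<p}. of_nat (p choose k) * a ^ k * b ^ (p - k)))"
    unfolding split using p0 by simp
  also have "(\<Sum>k\<in>{1..<p}. of_nat (p choose k) * a ^ k * b ^ (p - k)) = of_nat p * binomial_middle p a b"
    unfolding binomial_middle_def sum_distrib_left by (rule sum.cong) (auto simp: middle)
  finally show ?thesis by (simp add: algebra_simps)
qed

lemma delta_add:
  assumes w: "witt_frame p (\<phi> :: 'a::idom \<Rightarrow> 'a)"
  shows "delta p \<phi> (a + b) = delta p \<phi> a + delta p \<phi> b - binomial_middle p a b"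
  by (rule delta_eqI[OF w])
    (simp add: witt_frame_phi_add[OF w] add_power_prime[OF witt_frame_prime[OF w]]
      phi_eq_power_plus_delta[OF w, of a] phi_eq_power_plus_delta[OF w, of b] algebra_simps)

lemma delta_mult:
  assumes w: "witt_frame p (\<phi> :: 'a::idom \<Rightarrow> 'a)"
  shows "delta p \<phi> (a * b)
    = a ^ p * delta p \<phi> b + b ^ p * delta p \<phi> a + of_nat p * delta p \<phi> a * delta p \<phi> b"
proof (rule delta_eqI[OF w])
  have "\<phi> (a * b) = (a ^ p + of_nat p * delta p \<phi> a) * (b ^ p + of_nat p * delta p \<phi> b)"
    using witt_frame_phi_mult[OF w, of a b] phi_eq_power_plus_delta[OF w] by metis
  then show "of_nat p * (a ^ p * delta p \<phi> b + b ^ p * delta p \<phi> a + of_nat p * delta p \<phi> a * delta p \<phi> b)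
      = \<phi> (a * b) - (a * b) ^ p"
    by (simp add: algebra_simps power_mult_distrib)
qed

lemma delta_uminus:
  assumes w: "witt_frame p (\<phi> :: 'a::idom \<Rightarrow> 'a)"
  shows "delta p \<phi> (- a) = - delta p \<phi> a"
  by (rule delta_eqI[OF w])
    (simp add: witt_frame_odd[OF w] witt_frame_phi_uminus[OF w] p_mult_delta[OF w] algebra_simps)

lemma delta_zero:
  assumes w: "witt_frame p (\<phi> :: 'a::idom \<Rightarrow> 'a)"
  shows "delta p \<phi> 0 = 0"
  using witt_frame_p_gt_1[OF w] by (intro delta_eqI[OF w]) (simp add: witt_frame_phi_zero[OF w])

lemma delta_one: "witt_frame p (\<phi> :: 'a::idom \<Rightarrow> 'a) \<Longrightarrow> delta p \<phi> 1 = 0"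
  by (rule delta_eqI) (simp_all add: witt_frame_phi_one)

lemma subring_delta_preimage:
  assumes w: "witt_frame p (\<phi> :: 'a::idom \<Rightarrow> 'a)" and A: "is_subring A"
  shows "is_subring {x \<in> A. delta p \<phi> x \<in> A}"
  unfolding is_subring_def
proof (intro conjI ballI)
  fix a b assume "a \<in> {x \<in> A. delta p \<phi> x \<in> A}" "b \<in> {x \<in> A. delta p \<phi> x \<in> A}"
  then have a: "a \<in> A" "delta p \<phi> a \<in> A" and b: "b \<in> A" "delta p \<phi> b \<in> A" by auto
  have "binomial_middle p a b \<in> A"
    unfolding binomial_middle_def using a b A
    by (intro subring_sum subring_mult subring_of_nat subring_power) auto
  then show "a + b \<in> {x \<in> A. delta p \<phi> x \<in> A}"
    using a b A by (simp add: delta_add[OF w] subring_add subring_diff)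
  show "a * b \<in> {x \<in> A. delta p \<phi> x \<in> A}"
    using a b A by (simp add: delta_mult[OF w] subring_add subring_mult subring_power subring_of_nat)
  show "- a \<in> {x \<in> A. delta p \<phi> x \<in> A}"
    using a A by (simp add: delta_uminus[OF w] subring_uminus)
qed (use A in \<open>simp_all add: delta_zero[OF w] delta_one[OF w] subring_zero subring_one\<close>)

lemma subring_phi_closed:
  "witt_frame p \<phi> \<Longrightarrow> is_subring A \<Longrightarrow> a \<in> A \<Longrightarrow> delta p \<phi> a \<in> A \<Longrightarrow> \<phi> a \<in> A"
  by (simp add: phi_eq_power_plus_delta subring_add subring_mult subring_of_nat subring_power)


section \<open>Evaluation of polynomials in several variables\<close>

definition is_ring_hom :: "('a::comm_ring_1 \<Rightarrow> 'b::comm_ring_1) \<Rightarrow> bool" where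
  "is_ring_hom h \<longleftrightarrow> h 0 = 0 \<and> h 1 = 1 \<and> (\<forall>a b. h (a + b) = h a + h b \<and> h (a * b) = h a * h b)"

definition monomial_value :: "('v \<Rightarrow> 'b::comm_ring_1) \<Rightarrow> ('v \<Rightarrow>\<^sub>0 nat) \<Rightarrow> 'b" where
  "monomial_value x m = (\<Prod>v\<in>Poly_Mapping.keys m. x v ^ Poly_Mapping.lookup m v)"

definition mpeval_map ::
  "('a::comm_ring_1 \<Rightarrow> 'b::comm_ring_1) \<Rightarrow> ('v \<Rightarrow> 'b) \<Rightarrow> ('v, 'a) mpoly \<Rightarrow> 'b" where
  "mpeval_map h x F = (\<Sum>m\<in>Poly_Mapping.keys F. h (Poly_Mapping.lookup F m) * monomial_value x m)"

lemma mpeval_eq_mpeval_map: "mpeval F x = mpeval_map (\<lambda>a. a) x F"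
  by (simp add: mpeval_def mpeval_map_def monomial_value_def)

lemma mpsubst_eq_mpeval_map: "mpsubst s F = mpeval_map mpC s F"
  by (simp add: mpsubst_def mpeval_map_def monomial_value_def)

lemma is_ring_hom_id: "is_ring_hom (\<lambda>a. a)"
  by (simp add: is_ring_hom_def)

lemma mpC_add: "mpC (a + b) = mpC a + mpC b" by (simp add: mpC_def single_add)
lemma mpC_mult: "mpC (a * b) = mpC a * mpC b" by (simp add: mpC_def mult_single)
lemma mpC_0: "mpC 0 = 0" by (simp add: mpC_def)
lemma mpC_1: "mpC 1 = 1" by (simp add: mpC_def)

lemma mpC_sum: "mpC (sum f S) = (\<Sum>i\<in>S. mpC (f i))"
  by (induction S rule: infinite_finite_induct) (simp_all add: mpC_0 mpC_add)

lemma is_ring_hom_mpC: "is_ring_hom mpC"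
  by (simp add: is_ring_hom_def mpC_add mpC_mult mpC_0 mpC_1)

lemma monomial_value_superset:
  assumes "finite S" "Poly_Mapping.keys m \<subseteq> S"
  shows "monomial_value x m = (\<Prod>v\<in>S. x v ^ Poly_Mapping.lookup m v)"
  unfolding monomial_value_def
  by (rule prod.mono_neutral_left[OF assms]) (simp add: in_keys_iff)

lemma monomial_value_add: "monomial_value x (m1 + m2) = monomial_value x m1 * monomial_value x m2"
proof -
  let ?S = "Poly_Mapping.keys m1 \<union> Poly_Mapping.keys m2"
  have "monomial_value x (m1 + m2) = (\<Prod>v\<in>?S. x v ^ Poly_Mapping.lookup (m1 + m2) v)"
    by (rule monomial_value_superset[OF _ keys_add]) simp
  also have "\<dots> = (\<Prod>v\<in>?S. x v ^ Poly_Mapping.lookup m1 v) * (\<Prod>v\<in>?S. x v ^ Poly_Mapping.lookup m2 v)"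
    by (simp add: lookup_add power_add prod.distrib)
  also have "\<dots> = monomial_value x m1 * monomial_value x m2"
    using monomial_value_superset[of ?S m1 x] monomial_value_superset[of ?S m2 x] by simp
  finally show ?thesis .
qed

lemma monomial_value_zero: "monomial_value x 0 = 1"
  by (simp add: monomial_value_def)

lemma monomial_value_single: "monomial_value x (Poly_Mapping.single v n) = x v ^ n"
  by (cases "n = 0") (simp_all add: monomial_value_def)

lemma poly_mapping_sum_single:
  "(F :: 'k \<Rightarrow>\<^sub>0 'b::comm_monoid_add)
    = (\<Sum>m\<in>Poly_Mapping.keys F. Poly_Mapping.single m (Poly_Mapping.lookup F m))"
proof (rule poly_mapping_eqI)
  fix k
  have "Poly_Mapping.lookup (\<Sum>m\<in>Poly_Mapping.keys F. Poly_Mapping.single m (Poly_Mapping.lookup F m)) k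
      = (\<Sum>m\<in>Poly_Mapping.keys F. (Poly_Mapping.lookup F m when m = k))"
    by (simp add: lookup_sum lookup_single)
  also have "\<dots> = Poly_Mapping.lookup F k"
    by (cases "k \<in> Poly_Mapping.keys F") (simp_all add: when_def in_keys_iff)
  finally show "Poly_Mapping.lookup F k
      = Poly_Mapping.lookup (\<Sum>m\<in>Poly_Mapping.keys F. Poly_Mapping.single m (Poly_Mapping.lookup F m)) k"
    by simp
qed

lemma poly_mapping_times_expand:
  "(F :: ('k::comm_monoid_add) \<Rightarrow>\<^sub>0 'b::comm_ring_1) * G =
    (\<Sum>m\<in>Poly_Mapping.keys F. \<Sum>m'\<in>Poly_Mapping.keys G.
       Poly_Mapping.single (m + m') (Poly_Mapping.lookup F m * Poly_Mapping.lookup G m'))"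
proof -
  have "F * G = (\<Sum>m\<in>Poly_Mapping.keys F. Poly_Mapping.single m (Poly_Mapping.lookup F m)) *
                (\<Sum>m'\<in>Poly_Mapping.keys G. Poly_Mapping.single m' (Poly_Mapping.lookup G m'))"
    using poly_mapping_sum_single[of F] poly_mapping_sum_single[of G] by simp
  also have "\<dots> = (\<Sum>m\<in>Poly_Mapping.keys F. \<Sum>m'\<in>Poly_Mapping.keys G.
       Poly_Mapping.single (m + m') (Poly_Mapping.lookup F m * Poly_Mapping.lookup G m'))"
    by (simp add: sum_product mult_single)
  finally show ?thesis .
qed

context
  fixes h :: "'a::comm_ring_1 \<Rightarrow> 'b::comm_ring_1"
  assumes h: "is_ring_hom h"
begin

lemma mpeval_map_zero: "mpeval_map h x 0 = 0"
  by (simp add: mpeval_map_def)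

lemma mpeval_map_single: "mpeval_map h x (Poly_Mapping.single m a) = h a * monomial_value x m"
  using h by (cases "a = 0") (simp_all add: mpeval_map_def is_ring_hom_def)

lemma mpeval_map_add: "mpeval_map h x (F + G) = mpeval_map h x F + mpeval_map h x G"
  unfolding mpeval_map_def
  by (rule setsum_keys_plus_distrib) (use h in \<open>simp_all add: is_ring_hom_def distrib_right\<close>)

lemma mpeval_map_sum: "mpeval_map h x (sum f S) = (\<Sum>i\<in>S. mpeval_map h x (f i))"
  by (induction S rule: infinite_finite_induct) (simp_all add: mpeval_map_zero mpeval_map_add)

lemma mpeval_map_uminus: "mpeval_map h x (- F) = - mpeval_map h x F"
  using mpeval_map_add[of x "- F" F] by (simp add: mpeval_map_zero eq_neg_iff_add_eq_0)

lemma mpeval_map_diff: "mpeval_map h x (F - G) = mpeval_map h x F - mpeval_map h x G"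
  using mpeval_map_add[of x F "- G"] mpeval_map_uminus[of x G] by simp

lemma mpeval_map_mult: "mpeval_map h x (F * G) = mpeval_map h x F * mpeval_map h x G"
proof -
  have "mpeval_map h x (F * G) = (\<Sum>m\<in>Poly_Mapping.keys F. \<Sum>m'\<in>Poly_Mapping.keys G.
       h (Poly_Mapping.lookup F m * Poly_Mapping.lookup G m') * monomial_value x (m + m'))"
    by (subst poly_mapping_times_expand) (simp add: mpeval_map_sum mpeval_map_single)
  also have "\<dots> = (\<Sum>m\<in>Poly_Mapping.keys F. \<Sum>m'\<in>Poly_Mapping.keys G.
       (h (Poly_Mapping.lookup F m) * monomial_value x m) * (h (Poly_Mapping.lookup G m') * monomial_value x m'))"
    using h by (simp add: is_ring_hom_def monomial_value_add algebra_simps)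
  also have "\<dots> = mpeval_map h x F * mpeval_map h x G"
    unfolding mpeval_map_def by (rule sum_product[symmetric])
  finally show ?thesis .
qed

lemma mpeval_map_one: "mpeval_map h x 1 = 1"
  using mpeval_map_single[of x 0 1] h by (simp add: is_ring_hom_def monomial_value_zero)

lemma mpeval_map_prod: "mpeval_map h x (prod f S) = (\<Prod>i\<in>S. mpeval_map h x (f i))"
  by (induction S rule: infinite_finite_induct) (simp_all add: mpeval_map_one mpeval_map_mult)

lemma mpeval_map_power: "mpeval_map h x (F ^ n) = mpeval_map h x F ^ n"
  by (induction n) (simp_all add: mpeval_map_one mpeval_map_mult)

lemma mpeval_map_mpX: "mpeval_map h x (mpX v) = x v"
  using h by (simp add: mpX_def mpeval_map_single monomial_value_single is_ring_hom_def)

lemma mpeval_map_mpC: "mpeval_map h x (mpC a) = h a"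
  by (simp add: mpC_def mpeval_map_single monomial_value_zero)

lemma mpeval_map_mpsubst:
  "mpeval_map h x (mpsubst s F) = mpeval_map h (\<lambda>v. mpeval_map h x (s v)) F"
  unfolding mpsubst_eq_mpeval_map mpeval_map_def[of mpC]
  by (simp add: mpeval_map_sum mpeval_map_mult mpeval_map_mpC monomial_value_def
      mpeval_map_prod mpeval_map_power mpeval_map_def[of h _ F])

end

lemma mpeval_add: "mpeval (F + G) x = mpeval F x + mpeval G x"
  by (simp add: mpeval_eq_mpeval_map mpeval_map_add[OF is_ring_hom_id])

lemma mpeval_uminus: "mpeval (- F) x = - mpeval F x"
  by (simp add: mpeval_eq_mpeval_map mpeval_map_uminus[OF is_ring_hom_id])

lemma mpeval_diff: "mpeval (F - G) x = mpeval F x - mpeval G x"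
  by (simp add: mpeval_eq_mpeval_map mpeval_map_diff[OF is_ring_hom_id])

lemma mpeval_mult: "mpeval (F * G) x = mpeval F x * mpeval G x"
  by (simp add: mpeval_eq_mpeval_map mpeval_map_mult[OF is_ring_hom_id])

lemma mpeval_sum: "mpeval (sum f S) x = (\<Sum>i\<in>S. mpeval (f i) x)"
  by (simp add: mpeval_eq_mpeval_map mpeval_map_sum[OF is_ring_hom_id])

lemma mpeval_power: "mpeval (F ^ n) x = mpeval F x ^ n"
  by (simp add: mpeval_eq_mpeval_map mpeval_map_power[OF is_ring_hom_id])

lemma mpeval_mpX: "mpeval (mpX v) x = x v"
  by (simp add: mpeval_eq_mpeval_map mpeval_map_mpX[OF is_ring_hom_id])

lemma mpeval_mpC: "mpeval (mpC a) x = a"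
  by (simp add: mpeval_eq_mpeval_map mpeval_map_mpC[OF is_ring_hom_id])

lemma mpeval_mpsubst: "mpeval (mpsubst s F) x = mpeval F (\<lambda>v. mpeval (s v) x)"
  by (simp add: mpeval_eq_mpeval_map mpeval_map_mpsubst[OF is_ring_hom_id])

lemmas mpeval_simps = mpeval_add mpeval_uminus mpeval_diff mpeval_mult mpeval_sum mpeval_power
  mpeval_mpX mpeval_mpC

lemma mpX_power: "mpX v ^ n = Poly_Mapping.single (Poly_Mapping.single v n) (1::'a::comm_ring_1)"
  by (induction n) (simp_all add: mpX_def mult_single single_add[symmetric])

lemma prod_single_one:
  "finite S \<Longrightarrow> (\<Prod>i\<in>S. Poly_Mapping.single (f i) (1::'a::comm_ring_1)) = Poly_Mapping.single (\<Sum>i\<in>S. f i) 1"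
  by (induction S rule: finite_induct) (simp_all add: mult_single)

lemma monomial_value_mpX: "monomial_value mpX m = Poly_Mapping.single m (1::'a::comm_ring_1)"
proof -
  have "monomial_value mpX m
      = Poly_Mapping.single (\<Sum>v\<in>Poly_Mapping.keys m. Poly_Mapping.single v (Poly_Mapping.lookup m v)) (1::'a)"
    by (simp add: monomial_value_def mpX_power prod_single_one)
  then show ?thesis using poly_mapping_sum_single[of m] by simp
qed

lemma mpsubst_mpX: "mpsubst mpX F = (F :: ('v, 'a::comm_ring_1) mpoly)"
proof -
  have "mpsubst mpX F = (\<Sum>m\<in>Poly_Mapping.keys F. Poly_Mapping.single m (Poly_Mapping.lookup F m))"
    unfolding mpsubst_eq_mpeval_map mpeval_map_def
    by (simp add: monomial_value_mpX mpC_def mult_single)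
  then show ?thesis using poly_mapping_sum_single[of F] by simp
qed

context
  fixes \<O> :: "'a::comm_ring_1 set"
  assumes sr: "is_subring \<O>"
begin

lemma mp_over_single: "a \<in> \<O> \<Longrightarrow> mp_over \<O> (Poly_Mapping.single m a)"
  by (simp add: mp_over_def lookup_single when_def subring_zero[OF sr])

lemma mp_over_sum: "(\<And>i. i \<in> S \<Longrightarrow> mp_over \<O> (f i)) \<Longrightarrow> mp_over \<O> (sum f S)"
  unfolding mp_over_def lookup_sum by (auto intro!: subring_sum[OF sr])

lemma mp_over_add: "mp_over \<O> F \<Longrightarrow> mp_over \<O> G \<Longrightarrow> mp_over \<O> (F + G)"
  by (simp add: mp_over_def lookup_add subring_add[OF sr])

lemma mp_over_uminus: "mp_over \<O> F \<Longrightarrow> mp_over \<O> (- F)"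
  by (simp add: mp_over_def subring_uminus[OF sr])

lemma mp_over_diff: "mp_over \<O> F \<Longrightarrow> mp_over \<O> G \<Longrightarrow> mp_over \<O> (F - G)"
  by (simp add: mp_over_def lookup_minus subring_diff[OF sr])

lemma mp_over_mult:
  assumes "mp_over \<O> F" "mp_over \<O> G"
  shows "mp_over \<O> (F * G)"
  unfolding poly_mapping_times_expand
  using assms by (intro mp_over_sum mp_over_single subring_mult[OF sr]) (auto simp: mp_over_def)

lemma mp_over_one: "mp_over \<O> 1"
  using mp_over_single[OF subring_one[OF sr], of 0] by simp

lemma mp_over_power: "mp_over \<O> F \<Longrightarrow> mp_over \<O> (F ^ n)"
  by (induction n) (simp_all add: mp_over_one mp_over_mult)

lemma mp_over_prod: "(\<And>i. i \<in> S \<Longrightarrow> mp_over \<O> (f i)) \<Longrightarrow> mp_over \<O> (prod f S)"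
  by (induction S rule: infinite_finite_induct) (simp_all add: mp_over_one mp_over_mult)

lemma mp_over_mpX: "mp_over \<O> (mpX v)"
  by (simp add: mpX_def mp_over_single subring_one[OF sr])

lemma mp_over_mpC: "a \<in> \<O> \<Longrightarrow> mp_over \<O> (mpC a)"
  by (simp add: mpC_def mp_over_single)

lemma mp_over_mpsubst:
  assumes "mp_over \<O> F" "\<And>v. mp_over \<O> (s v)"
  shows "mp_over \<O> (mpsubst s F)"
  unfolding mpsubst_def
  by (intro mp_over_sum mp_over_mult mp_over_mpC mp_over_prod mp_over_power assms(2))
    (use assms(1) in \<open>auto simp: mp_over_def\<close>)

end

lemma mpeval_in_subring:
  assumes "is_subring A" "mp_over A F" "\<And>v. x v \<in> A"
  shows "mpeval F x \<in> A"
  unfolding mpeval_def using assms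
  by (auto intro!: subring_sum subring_mult subring_prod subring_power simp: mp_over_def)

lemma hom_on_mpeval:
  assumes "hom_on A s" "is_subring A" "s 1 = 1" "mp_over \<O> F" "\<O> \<subseteq> A"
    "\<And>a. a \<in> \<O> \<Longrightarrow> s a = a" "\<And>v. x v \<in> A"
  shows "s (mpeval F x) = mpeval F (\<lambda>v. s (x v))"
proof -
  have "Poly_Mapping.lookup F m \<in> A" "Poly_Mapping.lookup F m \<in> \<O>" for m
    using assms(4,5) by (auto simp: mp_over_def)
  then show ?thesis
    unfolding mpeval_def using assms
    by (simp add: hom_on_sum hom_on_mult hom_on_prod hom_on_power subring_mult subring_prod subring_power)
qed

definition mat_fun :: "'a^'n^'m \<Rightarrow> 'm \<times> 'n \<Rightarrow> 'a" where
  "mat_fun Y = (\<lambda>(i, j). Y $ i $ j)"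

lemma mat_fun_apply [simp]: "mat_fun Y (i, j) = Y $ i $ j"
  by (simp add: mat_fun_def)

lemma mem_I0_iff: "F \<in> I0 \<O> u \<longleftrightarrow> mp_over \<O> F \<and> mpeval F (mat_fun u) = 0"
  by (simp add: I0_def mat_fun_def)

lemma mpeval_sigma0:
  fixes c Y :: "'a::comm_ring_1^'n^'n"
  shows "mpeval (sigma0 c F) (mat_fun Y) = mpeval F (mat_fun (Y ** c))"
proof -
  have "(\<lambda>v. mpeval (case v of (i, j) \<Rightarrow> \<Sum>k\<in>UNIV. mpX (i, k) * mpC (c $ k $ j)) (mat_fun Y))
      = mat_fun (Y ** c)"
    by (auto simp: mpeval_simps matrix_matrix_mult_def)
  then show ?thesis
    unfolding sigma0_def mpeval_mpsubst by simp
qed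

lemma sigma0_sigma0:
  fixes c c' :: "'a::comm_ring_1^'n^'n"
  assumes "c ** c' = mat 1"
  shows "sigma0 c (sigma0 c' F) = F"
proof -
  let ?s = "\<lambda>c. \<lambda>(i, j). \<Sum>k\<in>UNIV. mpX (i, k) * mpC (c $ k $ j)"
  have "mpsubst (?s c) (?s c' v) = mpX v" for v
  proof -
    obtain i j where v: "v = (i, j)" by fastforce
    have "mpsubst (?s c) (?s c' v)
        = (\<Sum>k\<in>UNIV. \<Sum>l\<in>UNIV. mpX (i, l) * mpC (c $ l $ k * c' $ k $ j))"
      unfolding mpsubst_eq_mpeval_map v
      by (simp add: mpeval_map_sum[OF is_ring_hom_mpC] mpeval_map_mult[OF is_ring_hom_mpC]
          mpeval_map_mpX[OF is_ring_hom_mpC] mpeval_map_mpC[OF is_ring_hom_mpC]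
          sum_distrib_right mpC_mult mult.assoc)
    also have "\<dots> = (\<Sum>l\<in>UNIV. mpX (i, l) * mpC ((c ** c') $ l $ j))"
      by (subst sum.swap) (simp add: sum_distrib_left mpC_sum matrix_matrix_mult_def)
    also have "\<dots> = mpX (i, j)"
      by (simp add: assms mat_def if_distrib mpC_0 mpC_1 cong: if_cong)
    finally show ?thesis by (simp add: v)
  qed
  then have inner: "(\<lambda>v. mpsubst (?s c) (?s c' v)) = mpX" ..
  have comp: "mpsubst (?s c) (mpsubst (?s c') F) = mpsubst (\<lambda>v. mpsubst (?s c) (?s c' v)) F"
    using mpeval_map_mpsubst[OF is_ring_hom_mpC] by (simp add: mpsubst_eq_mpeval_map)
  show ?thesis
    unfolding sigma0_def comp inner by (rule mpsubst_mpX)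
qed

lemma mp_over_sigma0:
  assumes "is_subring \<O>" "mp_over \<O> F" "\<And>k j. c $ k $ j \<in> \<O>"
  shows "mp_over \<O> (sigma0 c F)"
  unfolding sigma0_def
  using assms by (intro mp_over_mpsubst) (auto intro!: mp_over_sum mp_over_mult mp_over_mpX mp_over_mpC)

lemma ring_gen_entries_eq:
  assumes sr: "is_subring \<O>"
  shows "ring_gen \<O> (entries u) = {mpeval F (mat_fun u) | F. mp_over \<O> F}"
    (is "_ = ?E")
proof
  have evalI: "mp_over \<O> F \<Longrightarrow> a = mpeval F (mat_fun u) \<Longrightarrow> a \<in> ?E" for F a
    by blast
  have "is_subring ?E"
    unfolding is_subring_def
  proof (intro conjI ballI)
    show "0 \<in> ?E" "1 \<in> ?E"
      by (intro evalI[OF mp_over_mpC[OF sr subring_zero[OF sr]]] evalI[OF mp_over_mpC[OF sr subring_one[OF sr]]];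
          simp add: mpeval_simps)+
    fix a b assume "a \<in> ?E" "b \<in> ?E"
    then obtain F G where F: "mp_over \<O> F" "a = mpeval F (mat_fun u)"
      and G: "mp_over \<O> G" "b = mpeval G (mat_fun u)" by blast
    show "a + b \<in> ?E"
      by (rule evalI[OF mp_over_add[OF sr F(1) G(1)]]) (simp add: F G mpeval_simps)
    show "a * b \<in> ?E"
      by (rule evalI[OF mp_over_mult[OF sr F(1) G(1)]]) (simp add: F G mpeval_simps)
    show "- a \<in> ?E"
      by (rule evalI[OF mp_over_uminus[OF sr F(1)]]) (simp add: F mpeval_simps)
  qed
  moreover have "\<O> \<subseteq> ?E"
  proof
    fix a assume "a \<in> \<O>"
    then show "a \<in> ?E"
      by (rule evalI[OF mp_over_mpC[OF sr]]) (simp add: mpeval_simps)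
  qed
  moreover have "entries u \<subseteq> ?E"
  proof
    fix a assume "a \<in> entries u"
    then obtain i j where "a = u $ i $ j" by (auto simp: entries_def)
    then show "a \<in> ?E"
      by (intro evalI[OF mp_over_mpX[OF sr, of "(i, j)"]]) (simp add: mpeval_simps)
  qed
  ultimately show "ring_gen \<O> (entries u) \<subseteq> ?E" by (rule ring_gen_least)
next
  have "mat_fun u v \<in> ring_gen \<O> (entries u)" for v
    using ring_gen_gens_subset[of "entries u" \<O>] by (cases v) (auto simp: entries_def)
  moreover have "mp_over \<O> F \<Longrightarrow> mp_over (ring_gen \<O> (entries u)) F" for F
    using ring_gen_base_subset[of \<O>] by (auto simp: mp_over_def)
  ultimately show "?E \<subseteq> ring_gen \<O> (entries u)"
    using mpeval_in_subring[OF subring_ring_gen] by blast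
qed

section \<open>Automorphisms of O[u] given by right translation\<close>

lemma automorphism_imp_Sigma0:
  fixes u c :: "'a::comm_ring_1^'n^'n"
  assumes sr: "is_subring \<O>" and aut: "O_alg_aut \<O> (ring_gen \<O> (entries u)) \<sigma>"
    and su: "mat_map \<sigma> u = u ** c" and c: "in_GL \<O> c"
  shows "c \<in> Sigma0 \<O> u"
proof -
  let ?A = "ring_gen \<O> (entries u)"
  obtain b where b: "\<And>i j. b $ i $ j \<in> \<O>" "c ** b = mat 1" "b ** c = mat 1"
    using c by (auto simp: in_GL_def)
  have c_in: "\<And>i j. c $ i $ j \<in> \<O>" using c by (simp add: in_GL_def)
  have hom: "hom_on ?A \<sigma>" and fix_O: "\<And>a. a \<in> \<O> \<Longrightarrow> \<sigma> a = a" and inj: "inj_on \<sigma> ?A"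
    using aut by (auto simp: O_alg_aut_def hom_on_def bij_betw_def)
  have eval: "\<sigma> (mpeval F (mat_fun u)) = mpeval F (mat_fun (u ** c))" if "mp_over \<O> F" for F
  proof -
    have "\<sigma> (mpeval F (mat_fun u)) = mpeval F (\<lambda>v. \<sigma> (mat_fun u v))"
      using fix_O ring_gen_gens_subset[of "entries u" \<O>] subring_one[OF sr]
      by (intro hom_on_mpeval[OF hom subring_ring_gen _ that ring_gen_base_subset])
        (auto simp: entries_def mat_fun_def split: prod.split)
    also have "(\<lambda>v. \<sigma> (mat_fun u v)) = mat_fun (u ** c)"
      using su by (auto simp: vec_eq_iff mat_map_def)
    finally show ?thesis .
  qed
  have s0: "\<sigma> 0 = 0" by (rule hom_on_zero[OF hom subring_ring_gen])
  have mono: "sigma0 c F \<in> I0 \<O> u" if "F \<in> I0 \<O> u" for F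
    using that eval[of F] s0 mp_over_sigma0[OF sr _ c_in, of F]
    by (simp add: mem_I0_iff mpeval_sigma0)
  have "F \<in> sigma0 c ` I0 \<O> u" if F: "F \<in> I0 \<O> u" for F
  proof -
    have G: "mp_over \<O> (sigma0 b F)" using F mp_over_sigma0[OF sr _ b(1)] by (simp add: mem_I0_iff)
    have "\<sigma> (mpeval (sigma0 b F) (mat_fun u)) = \<sigma> 0"
      using F eval[OF G] s0 by (simp add: mem_I0_iff mpeval_sigma0 matrix_mul_assoc[symmetric] b(2))
    moreover have "mpeval (sigma0 b F) (mat_fun u) \<in> ?A"
      using G by (auto simp: ring_gen_entries_eq[OF sr])
    ultimately have "mpeval (sigma0 b F) (mat_fun u) = 0"
      using inj_onD[OF inj] subring_zero[OF subring_ring_gen] by blast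
    then have "sigma0 b F \<in> I0 \<O> u" using G by (simp add: mem_I0_iff)
    then show ?thesis using sigma0_sigma0[OF b(2)] by (metis image_eqI)
  qed
  then show ?thesis using mono c by (auto simp: Sigma0_def)
qed

lemma Sigma0_eval_eq_iff:
  fixes u c :: "'a::comm_ring_1^'n^'n"
  assumes sr: "is_subring \<O>" and c: "c \<in> Sigma0 \<O> u"
    and F: "mp_over \<O> F" and G: "mp_over \<O> G"
  shows "mpeval F (mat_fun (u ** c)) = mpeval G (mat_fun (u ** c))
    \<longleftrightarrow> mpeval F (mat_fun u) = mpeval G (mat_fun u)"
proof -
  obtain b where b: "\<And>i j. b $ i $ j \<in> \<O>" "b ** c = mat 1"
    using c by (auto simp: Sigma0_def in_GL_def)
  have c_in: "\<And>i j. c $ i $ j \<in> \<O>" and pres: "sigma0 c ` I0 \<O> u = I0 \<O> u"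
    using c by (auto simp: Sigma0_def in_GL_def)
  have H: "mp_over \<O> (F - G)" by (rule mp_over_diff[OF sr F G])
  have "mpeval F (mat_fun (u ** c)) = mpeval G (mat_fun (u ** c)) \<longleftrightarrow> sigma0 c (F - G) \<in> I0 \<O> u"
    using mp_over_sigma0[OF sr H c_in]
    by (simp add: mem_I0_iff mpeval_sigma0 mpeval_simps)
  also have "\<dots> \<longleftrightarrow> F - G \<in> I0 \<O> u"
  proof
    assume "sigma0 c (F - G) \<in> I0 \<O> u"
    then obtain K where "K \<in> I0 \<O> u" "sigma0 c (F - G) = sigma0 c K"
      using pres by (metis imageE)
    then show "F - G \<in> I0 \<O> u" using sigma0_sigma0[OF b(2)] by metis
  qed (use pres in blast)
  also have "\<dots> \<longleftrightarrow> mpeval F (mat_fun u) = mpeval G (mat_fun u)"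
    using H by (simp add: mem_I0_iff mpeval_simps)
  finally show ?thesis .
qed

text \<open>The O-algebra map O[u] \<rightarrow> O[v] with u \<mapsto> v, computed through some polynomial
  expression of the argument; it is well defined once u and v satisfy the same relations over O.\<close>

definition induced_map :: "'a::comm_ring_1 set \<Rightarrow> 'a^'n^'n \<Rightarrow> 'a^'n^'n \<Rightarrow> 'a \<Rightarrow> 'a" where
  "induced_map \<O> u v x = mpeval (SOME F. mp_over \<O> F \<and> x = mpeval F (mat_fun u)) (mat_fun v)"

lemma induced_map_eval:
  fixes u c :: "'a::comm_ring_1^'n^'n"
  assumes sr: "is_subring \<O>" and c: "c \<in> Sigma0 \<O> u" and F: "mp_over \<O> F"
  shows "induced_map \<O> u (u ** c) (mpeval F (mat_fun u)) = mpeval F (mat_fun (u ** c))"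
proof -
  let ?G = "SOME G. mp_over \<O> G \<and> mpeval F (mat_fun u) = mpeval G (mat_fun u)"
  have "\<exists>G. mp_over \<O> G \<and> mpeval F (mat_fun u) = mpeval G (mat_fun u)" using F by blast
  then have G: "mp_over \<O> ?G \<and> mpeval F (mat_fun u) = mpeval ?G (mat_fun u)" by (rule someI_ex)
  have "mpeval ?G (mat_fun (u ** c)) = mpeval F (mat_fun (u ** c))"
    using Sigma0_eval_eq_iff[OF sr c conjunct1[OF G] F] conjunct2[OF G] by argo
  then show ?thesis unfolding induced_map_def .
qed

lemma induced_map_bij_betw:
  fixes u c :: "'a::comm_ring_1^'n^'n"
  assumes sr: "is_subring \<O>" and c: "c \<in> Sigma0 \<O> u"
  shows "bij_betw (induced_map \<O> u (u ** c)) (ring_gen \<O> (entries u)) (ring_gen \<O> (entries u))"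
proof -
  let ?A = "ring_gen \<O> (entries u)" and ?\<sigma> = "induced_map \<O> u (u ** c)"
  have A: "?A = {mpeval F (mat_fun u) | F. mp_over \<O> F}" by (rule ring_gen_entries_eq[OF sr])
  obtain b where b: "\<And>i j. b $ i $ j \<in> \<O>" "c ** b = mat 1"
    using c by (auto simp: Sigma0_def in_GL_def)
  have c_in: "\<And>i j. c $ i $ j \<in> \<O>" using c by (auto simp: Sigma0_def in_GL_def)
  note eval = induced_map_eval[OF sr c]
  have "inj_on ?\<sigma> ?A"
  proof (rule inj_onI)
    fix x y assume "x \<in> ?A" "y \<in> ?A" and eq: "?\<sigma> x = ?\<sigma> y"
    then obtain F G where F: "mp_over \<O> F" "x = mpeval F (mat_fun u)"
      and G: "mp_over \<O> G" "y = mpeval G (mat_fun u)" unfolding A by blast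
    show "x = y"
      using eq Sigma0_eval_eq_iff[OF sr c F(1) G(1)] by (simp add: F(2) G(2) eval[OF F(1)] eval[OF G(1)])
  qed
  moreover have "?\<sigma> ` ?A \<subseteq> ?A"
  proof
    fix y assume "y \<in> ?\<sigma> ` ?A"
    then obtain F where F: "mp_over \<O> F" "y = ?\<sigma> (mpeval F (mat_fun u))" unfolding A by blast
    then have "y = mpeval (sigma0 c F) (mat_fun u)" by (simp add: eval mpeval_sigma0)
    then show "y \<in> ?A" using mp_over_sigma0[OF sr F(1) c_in] unfolding A by blast
  qed
  moreover have "?A \<subseteq> ?\<sigma> ` ?A"
  proof
    fix x assume "x \<in> ?A"
    then obtain G where G: "mp_over \<O> G" "x = mpeval G (mat_fun u)" by (auto simp: A)
    have F: "mp_over \<O> (sigma0 b G)" by (rule mp_over_sigma0[OF sr G(1) b(1)])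
    have "?\<sigma> (mpeval (sigma0 b G) (mat_fun u)) = mpeval (sigma0 b G) (mat_fun (u ** c))"
      by (rule eval[OF F])
    also have "\<dots> = x"
      by (simp add: mpeval_sigma0 matrix_mul_assoc[symmetric] b(2) G(2))
    finally have "?\<sigma> (mpeval (sigma0 b G) (mat_fun u)) = x" .
    then show "x \<in> ?\<sigma> ` ?A" using F by (auto simp: A)
  qed
  ultimately show ?thesis by (simp add: bij_betw_def)
qed

lemma Sigma0_imp_automorphism:
  fixes u c :: "'a::comm_ring_1^'n^'n"
  assumes sr: "is_subring \<O>" and c: "c \<in> Sigma0 \<O> u"
  shows "O_alg_aut \<O> (ring_gen \<O> (entries u)) (induced_map \<O> u (u ** c))"
    and "mat_map (induced_map \<O> u (u ** c)) u = u ** c"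
proof -
  let ?A = "ring_gen \<O> (entries u)" and ?\<sigma> = "induced_map \<O> u (u ** c)"
  note eval = induced_map_eval[OF sr c]
  have "?\<sigma> (x + y) = ?\<sigma> x + ?\<sigma> y \<and> ?\<sigma> (x * y) = ?\<sigma> x * ?\<sigma> y"
    if xy: "x \<in> ?A" "y \<in> ?A" for x y
  proof -
    obtain F G where F: "mp_over \<O> F" "x = mpeval F (mat_fun u)"
      and G: "mp_over \<O> G" "y = mpeval G (mat_fun u)"
      using xy unfolding ring_gen_entries_eq[OF sr] by blast
    have "?\<sigma> (x + y) = ?\<sigma> (mpeval (F + G) (mat_fun u))" by (simp add: F G mpeval_simps)
    also have "\<dots> = ?\<sigma> x + ?\<sigma> y"
      unfolding eval[OF mp_over_add[OF sr F(1) G(1)]] by (simp add: eval F G mpeval_simps)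
    moreover have "?\<sigma> (x * y) = ?\<sigma> (mpeval (F * G) (mat_fun u))" by (simp add: F G mpeval_simps)
    moreover have "\<dots> = ?\<sigma> x * ?\<sigma> y"
      unfolding eval[OF mp_over_mult[OF sr F(1) G(1)]] by (simp add: eval F G mpeval_simps)
    ultimately show ?thesis by simp
  qed
  moreover have "?\<sigma> a = a" if "a \<in> \<O>" for a
    using eval[OF mp_over_mpC[OF sr that]] by (simp add: mpeval_simps)
  ultimately show "O_alg_aut \<O> ?A ?\<sigma>"
    unfolding O_alg_aut_def using induced_map_bij_betw[OF sr c] by blast
  have "?\<sigma> (u $ i $ j) = (u ** c) $ i $ j" for i j
    using eval[OF mp_over_mpX[OF sr], of "(i, j)"] by (simp add: mpeval_simps)
  then show "mat_map ?\<sigma> u = u ** c"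
    by (simp add: vec_eq_iff mat_map_def)
qed

lemma Sigma0_eq_in_GL_if_alg_indep:
  fixes u :: "'a::comm_ring_1^'n^'n"
  assumes sr: "is_subring \<O>" and indep: "alg_indep \<O> (\<lambda>(i, j). u $ i $ j)"
  shows "Sigma0 \<O> u = {c. in_GL \<O> c}"
proof -
  have "I0 \<O> u = {0}"
    using indep subring_zero[OF sr] by (auto simp: I0_def alg_indep_def mp_over_def mpeval_def)
  moreover have "sigma0 c 0 = 0" for c :: "'a^'n^'n"
    by (simp add: sigma0_def mpsubst_def)
  ultimately show ?thesis by (simp add: Sigma0_def)
qed

lemma mat_map_apply [simp]: "mat_map f A $ i $ j = f (A $ i $ j)"
  by (simp add: mat_map_def)

lemma frob_pow_apply [simp]: "frob_pow p A $ i $ j = (A $ i $ j) ^ p"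
  by (simp add: frob_pow_def)

lemma matrix_mult_apply: "(A ** B) $ i $ j = (\<Sum>k\<in>UNIV. A $ i $ k * B $ k $ j)"
  by (simp add: matrix_matrix_mult_def)

lemma matrix_add_rdistrib: "((B::'a::semiring_1^'n^'m) + C) ** A = B ** A + C ** A"
  by (simp add: matrix_matrix_mult_def vec_eq_iff sum.distrib distrib_right)

lemma sum_UNIV_single:
  fixes f :: "'n::finite \<Rightarrow> 'a::comm_monoid_add"
  assumes "\<And>k. k \<noteq> r \<Longrightarrow> f k = 0"
  shows "(\<Sum>k\<in>UNIV. f k) = f r"
  using assms by (subst sum.remove[of _ r]) (simp_all add: sum.neutral)

lemma matrix_mult_in_subring:
  assumes "is_subring A" "\<And>i j. X $ i $ j \<in> A" "\<And>i j. Y $ i $ j \<in> A"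
  shows "(X ** Y) $ i $ j \<in> A"
  unfolding matrix_mult_apply using assms by (intro subring_sum subring_mult) auto

lemma mat_map_hom_on_mult:
  assumes "hom_on A s" "is_subring A" "\<And>i j. X $ i $ j \<in> A" "\<And>i j. Y $ i $ j \<in> A"
  shows "mat_map s (X ** Y) = mat_map s X ** mat_map s Y"
  using assms by (simp add: vec_eq_iff matrix_mult_apply hom_on_sum hom_on_mult subring_mult)

lemma mat_map_hom_on_add:
  assumes "hom_on A s" "\<And>i j. X $ i $ j \<in> A" "\<And>i j. Y $ i $ j \<in> A"
  shows "mat_map s (X + Y) = mat_map s X + mat_map s Y"
  using assms by (simp add: vec_eq_iff hom_on_add)

lemma mat_map_phi_mult: "witt_frame p \<phi> \<Longrightarrow> mat_map \<phi> (X ** Y) = mat_map \<phi> X ** mat_map \<phi> Y"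
  by (rule mat_map_hom_on_mult[OF witt_frame_hom_on subring_UNIV]) auto

lemma in_GL_mult_left_cancel:
  assumes "in_GL A u" "u ** c = u ** c'"
  shows "c = c'"
proof -
  obtain b where "b ** u = mat 1" using assms(1) by (auto simp: in_GL_def)
  then show ?thesis
    using arg_cong[OF assms(2), of "(**) b"] by (simp add: matrix_mul_assoc)
qed

lemma in_GL_column_nonzero:
  assumes "in_GL A v"
  shows "\<exists>i. v $ i $ j \<noteq> 0"
proof (rule ccontr)
  assume "\<not> (\<exists>i. v $ i $ j \<noteq> 0)"
  then have "(b ** v) $ j $ j = 0" for b
    by (simp add: matrix_mult_apply)
  moreover obtain b where "b ** v = mat 1" using assms by (auto simp: in_GL_def)
  ultimately have "mat 1 $ j $ j = (0 :: 'a)" by metis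
  then show False by (simp add: mat_def)
qed

lemma in_GL_row_nonzero:
  assumes "in_GL A v"
  shows "\<exists>j. v $ i $ j \<noteq> 0"
proof (rule ccontr)
  assume "\<not> (\<exists>j. v $ i $ j \<noteq> 0)"
  then have "(v ** b) $ i $ i = 0" for b
    by (simp add: matrix_mult_apply)
  moreover obtain b where "v ** b = mat 1" using assms by (auto simp: in_GL_def)
  ultimately have "mat 1 $ i $ i = (0 :: 'a)" by metis
  then show False by (simp add: mat_def)
qed

definition p_scaled :: "nat \<Rightarrow> 'a::comm_ring_1^'n^'n \<Rightarrow> 'a^'n^'n" where
  "p_scaled p \<alpha> = mat_map (\<lambda>x. of_nat p * x) \<alpha>"

lemma p_scaled_mult_apply: "(p_scaled p \<alpha> ** X) $ i $ j = of_nat p * (\<alpha> ** X) $ i $ j"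
  by (simp add: p_scaled_def matrix_mult_apply sum_distrib_left mult.assoc)

text \<open>A difference D with D = - p \<alpha> D is divisible by every power of p.\<close>

lemma p_scaled_cancel:
  fixes V W :: "'a::idom^'n^'m"
  assumes w: "witt_frame p (\<phi> :: 'a \<Rightarrow> 'a)"
    and eq: "V + p_scaled p \<alpha> ** V = W + p_scaled p \<alpha> ** W"
  shows "V = W"
proof -
  define D where "D = V - W"
  have D: "D $ i $ j = - (of_nat p * (\<alpha> ** D) $ i $ j)" for i j
  proof -
    have "V $ i $ j + of_nat p * (\<alpha> ** V) $ i $ j = W $ i $ j + of_nat p * (\<alpha> ** W) $ i $ j"
      using arg_cong[OF eq, of "\<lambda>M. M $ i $ j"] by (simp add: p_scaled_mult_apply)
    moreover have "(\<alpha> ** D) $ i $ j = (\<alpha> ** V) $ i $ j - (\<alpha> ** W) $ i $ j"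
      by (simp add: D_def matrix_mult_apply right_diff_distrib sum_subtractf)
    moreover have "D $ i $ j = V $ i $ j - W $ i $ j" by (simp add: D_def)
    ultimately show ?thesis by algebra
  qed
  have "\<forall>i j. (of_nat p :: 'a) ^ k dvd D $ i $ j" for k
  proof (induction k)
    case (Suc k)
    show ?case
    proof (intro allI)
      fix i j
      have "(of_nat p :: 'a) ^ Suc k dvd of_nat p * (\<alpha> ** D) $ i $ j"
        unfolding power_Suc matrix_mult_apply
        by (intro mult_dvd_mono dvd_refl dvd_sum) (use Suc in \<open>auto intro: dvd_mult\<close>)
      then show "(of_nat p :: 'a) ^ Suc k dvd D $ i $ j" by (simp add: D[of i j])
    qed
  qed simp
  then have "D = 0" using divisible_by_all_p_powers_eq_0[OF w] by (simp add: vec_eq_iff)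
  then show ?thesis by (simp add: D_def)
qed

section \<open>Monomial matrices\<close>

lemma in_GL_diag:
  fixes d e :: "'n::finite \<Rightarrow> 'a::comm_ring_1"
  assumes inverse: "\<And>j. e j * d j = 1"
  shows "in_GL UNIV (\<chi> i j. if i = j then d j else 0 :: 'a^'n^'n)"
proof -
  let ?D = "\<chi> i j. if i = j then d j else 0 :: 'a^'n^'n"
    and ?E = "\<chi> i j. if i = j then e j else 0 :: 'a^'n^'n"
  have "(?D ** ?E) $ i $ j = (if i = j then 1 else 0)" "(?E ** ?D) $ i $ j = (if i = j then 1 else 0)"
    for i j
    unfolding matrix_mult_apply
    by (subst sum_UNIV_single[where r = i], simp, use inverse[of i] in \<open>auto simp: mult.commute\<close>)+
  then have "?D ** ?E = mat 1" "?E ** ?D = mat 1" by (simp_all add: vec_eq_iff mat_def)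
  then show ?thesis unfolding in_GL_def by blast
qed

lemma Nmon_if_support_bij:
  fixes v :: "'a::comm_ring_1^'n::finite^'n"
  assumes v: "in_GL UNIV v" and r: "bij r" and off: "\<And>i j. i \<noteq> r j \<Longrightarrow> v $ i $ j = 0"
  shows "v \<in> Nmon"
proof -
  obtain b where b: "b ** v = mat 1" using v by (auto simp: in_GL_def)
  define \<pi> where "\<pi> = inv r"
  have \<pi>: "\<pi> i = j \<longleftrightarrow> r j = i" for i j
    using r unfolding \<pi>_def by (metis bij_inv_eq_iff)
  define W :: "'a^'n^'n" where "W = (\<chi> i j. if \<pi> i = j then 1 else 0)"
  define T :: "'a^'n^'n" where "T = (\<chi> i j. if i = j then v $ r j $ j else 0)"
  have "is_perm_mat W"
    unfolding is_perm_mat_def W_def \<pi>_def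
    using r bij_imp_permutes[OF bij_imp_bij_inv[OF r]] by blast
  moreover have "v = W ** T"
  proof -
    have "(W ** T) $ i $ j = v $ i $ j" for i j
    proof -
      have "(W ** T) $ i $ j = T $ \<pi> i $ j"
        unfolding matrix_mult_apply W_def by (subst sum_UNIV_single[where r = "\<pi> i"]) auto
      then show ?thesis using off[of i j] \<pi>[of i j] by (auto simp: T_def)
    qed
    then show ?thesis by (simp add: vec_eq_iff)
  qed
  moreover have "in_GL UNIV T"
  proof -
    have "b $ j $ r j * v $ r j $ j = 1" for j
    proof -
      have "(b ** v) $ j $ j = b $ j $ r j * v $ r j $ j"
        unfolding matrix_mult_apply by (rule sum_UNIV_single) (simp add: off)
      then show ?thesis using b by (simp add: mat_def)
    qed
    then show ?thesis unfolding T_def by (rule in_GL_diag)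
  qed
  moreover have "is_diag T" by (simp add: is_diag_def T_def)
  ultimately show ?thesis unfolding Nmon_def by blast
qed

lemma Nmon_if_one_nonzero_per_column:
  fixes v :: "'a::comm_ring_1^'n::finite^'n"
  assumes v: "in_GL UNIV v" and col: "\<And>a b j. a \<noteq> b \<Longrightarrow> v $ a $ j = 0 \<or> v $ b $ j = 0"
  shows "v \<in> Nmon"
proof -
  define r where "r j = (SOME i. v $ i $ j \<noteq> 0)" for j
  have r_nz: "v $ r j $ j \<noteq> 0" for j
    unfolding r_def using in_GL_column_nonzero[OF v] by (rule someI_ex)
  have off: "v $ i $ j = 0" if "i \<noteq> r j" for i j
    using col[OF that] r_nz[of j] by blast
  have "surj r"
  proof -
    have "i \<in> range r" for i
    proof -
      obtain j where "v $ i $ j \<noteq> 0" using in_GL_row_nonzero[OF v] by blast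
      then show ?thesis using off[of i j] by (metis rangeI)
    qed
    then show ?thesis by blast
  qed
  then have "bij r" by (simp add: bij_def finite_UNIV_surj_inj)
  then show ?thesis by (rule Nmon_if_support_bij[OF v _ off])
qed

lemma coeff_linear_power_1:
  "coeff ([:x, y:] ^ n) 1 = of_nat n * x ^ (n - 1) * (y :: 'a::comm_ring_1)"
proof (induction n)
  case (Suc n)
  have "coeff ([:x, y:] ^ Suc n) 1 = x * coeff ([:x, y:] ^ n) 1 + y * coeff ([:x, y:] ^ n) 0"
    by (simp add: coeff_mult)
  also have "\<dots> = x * (of_nat n * x ^ (n - 1) * y) + y * x ^ n"
    unfolding Suc.IH coeff_0_power by simp
  also have "\<dots> = of_nat (Suc n) * x ^ n * y"
    by (cases n) (simp_all add: algebra_simps)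
  finally show ?case by simp
qed simp

text \<open>If (x + l y)^p = x^p + l^p y^p for all l, the polynomial (x + Y y)^p - x^p - Y^p y^p
  vanishes on the infinite ring, so its linear coefficient p x^(p-1) y is zero.\<close>

lemma frobenius_additive_imp_zero:
  fixes x y :: "'a::idom"
  assumes w: "witt_frame p (\<phi> :: 'a \<Rightarrow> 'a)"
    and additive: "\<And>l. (x + l * y) ^ p = x ^ p + l ^ p * y ^ p"
  shows "x = 0 \<or> y = 0"
proof -
  define f where "f = [:x, y:] ^ p - [:x ^ p:] - monom (y ^ p) p"
  have "poly f l = 0" for l
    unfolding f_def using additive[of l] by (simp add: poly_monom algebra_simps)
  then have "f = 0"
    using poly_roots_finite[of f] witt_frame_infinite[OF w] by auto
  moreover have "coeff f 1 = of_nat p * x ^ (p - 1) * y"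
    using witt_frame_p_gt_1[OF w] unfolding f_def coeff_diff coeff_linear_power_1
    by (simp add: coeff_monom)
  ultimately show ?thesis using witt_frame_p_nonzero[OF w] by auto
qed

lemma Nmon_if_frobenius_additive_columns:
  fixes v :: "'a::idom^'n::finite^'n"
  assumes w: "witt_frame p (\<phi> :: 'a \<Rightarrow> 'a)" and v: "in_GL UNIV v"
    and additive: "\<And>a b j l. a \<noteq> b \<Longrightarrow>
      (v $ a $ j + l * v $ b $ j) ^ p = (v $ a $ j) ^ p + l ^ p * (v $ b $ j) ^ p"
  shows "v \<in> Nmon"
  using frobenius_additive_imp_zero[OF w additive]
  by (intro Nmon_if_one_nonzero_per_column[OF v])

lemma mem_Gdelta_iff:
  "witt_frame p \<phi> \<Longrightarrow> v \<in> Gdelta p \<phi> \<longleftrightarrow> in_GL UNIV v \<and> (\<forall>i j. \<phi> (v $ i $ j) = (v $ i $ j) ^ p)"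
  by (simp add: Gdelta_def delta_eq_0_iff)

lemma CARD_1_eq: "CARD('n::finite) = 1 \<Longrightarrow> (i :: 'n) = j"
  by (metis card_1_singletonE singletonD UNIV_I)

lemma Ndelta_eq_Gdelta_if_CARD_1:
  assumes "CARD('n::finite) = 1"
  shows "Ndelta p \<phi> = (Gdelta p \<phi> :: ('a::idom^'n^'n) set)"
  using Nmon_if_one_nonzero_per_column[where 'a = 'a] CARD_1_eq[OF assms]
  by (auto simp: Ndelta_def Gdelta_def)

lemma Ndelta_if_frobenius_additive:
  fixes v :: "'a::idom^'n::finite^'n"
  assumes w: "witt_frame p \<phi>" and v: "in_GL UNIV v"
    and phi: "\<And>i j. \<phi> (v $ i $ j) = (v $ i $ j) ^ p"
    and additive: "\<And>a b j l. a \<noteq> b \<Longrightarrow>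
      (v $ a $ j + l * v $ b $ j) ^ p = (v $ a $ j) ^ p + l ^ p * (v $ b $ j) ^ p"
  shows "v \<in> Ndelta p \<phi>"
  using Nmon_if_frobenius_additive_columns[OF w v additive] v phi
  by (simp add: Ndelta_def mem_Gdelta_iff[OF w])

lemma Ndelta_if_frobenius_identity:
  fixes c :: "'a::idom^'n::finite^'n"
  assumes w: "witt_frame p \<phi>" and c: "in_GL UNIV c"
    and identity: "\<And>t j. (\<Sum>k\<in>UNIV. t k * c $ k $ j) ^ p = (\<Sum>k\<in>UNIV. t k ^ p * \<phi> (c $ k $ j))"
  shows "c \<in> Ndelta p \<phi>"
proof -
  have p0: "0 < p" using witt_frame_p_gt_1[OF w] by simp
  have phi: "\<phi> (c $ a $ j) = (c $ a $ j) ^ p" for a j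
  proof -
    define t :: "'n \<Rightarrow> 'a" where "t k = (if k = a then 1 else 0)" for k
    have "(\<Sum>k\<in>UNIV. t k * c $ k $ j) = c $ a $ j"
      by (subst sum_UNIV_single[where r = a]) (simp_all add: t_def)
    moreover have "(\<Sum>k\<in>UNIV. t k ^ p * \<phi> (c $ k $ j)) = \<phi> (c $ a $ j)"
      using p0 by (subst sum_UNIV_single[where r = a]) (simp_all add: t_def)
    ultimately show ?thesis using identity[of t j] by simp
  qed
  show ?thesis
  proof (rule Ndelta_if_frobenius_additive[OF w c phi])
    fix a b j :: 'n and l :: 'a assume ab: "a \<noteq> b"
    define t :: "'n \<Rightarrow> 'a" where "t k = (if k = a then 1 else 0) + (if k = b then l else 0)" for k
    have "(\<Sum>k\<in>UNIV. t k * c $ k $ j) = c $ a $ j + l * c $ b $ j"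
      by (simp add: t_def distrib_right sum.distrib if_distrib[of "\<lambda>x. x * _"] cong: if_cong)
    moreover have "(\<Sum>k\<in>UNIV. t k ^ p * \<phi> (c $ k $ j)) = (c $ a $ j) ^ p + l ^ p * (c $ b $ j) ^ p"
    proof -
      have "t k ^ p * \<phi> (c $ k $ j)
          = (if k = a then (c $ a $ j) ^ p else 0) + (if k = b then l ^ p * (c $ b $ j) ^ p else 0)" for k
        using ab p0 by (simp add: t_def phi)
      then show ?thesis by (simp add: sum.distrib)
    qed
    ultimately show "(c $ a $ j + l * c $ b $ j) ^ p = (c $ a $ j) ^ p + l ^ p * (c $ b $ j) ^ p"
      using identity[of t j] by simp
  qed
qed

section \<open>The groups G_w\<close>

lemma Nmon_support:
  fixes v :: "'a::comm_ring_1^'n::finite^'n"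
  assumes "v \<in> Nmon"
  obtains r where "\<And>i j. i \<noteq> r j \<Longrightarrow> v $ i $ j = 0"
proof -
  obtain W T \<pi> where v: "v = W ** T" and \<pi>: "\<pi> permutes (UNIV :: 'n set)"
    and W: "W = (\<chi> i j. if \<pi> i = j then 1 else 0)" and T: "is_diag T"
    using assms by (auto simp: Nmon_def is_perm_mat_def)
  have "v $ i $ j = 0" if "i \<noteq> inv \<pi> j" for i j
  proof -
    have "v $ i $ j = T $ \<pi> i $ j"
      unfolding v W matrix_mult_apply by (subst sum_UNIV_single[where r = "\<pi> i"]) auto
    moreover have "\<pi> i \<noteq> j" using that permutes_inverses(2)[OF \<pi>] by metis
    ultimately show ?thesis using T by (simp add: is_diag_def)
  qed
  then show ?thesis by (rule that)
qed

lemma Ndelta_subset_Gw: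
  fixes v w :: "'a::idom^'n::finite^'n"
  assumes w: "witt_frame p \<phi>" and v: "v \<in> Ndelta p \<phi>"
  shows "v \<in> Gw p \<phi> w"
proof -
  obtain r where off: "\<And>i j. i \<noteq> r j \<Longrightarrow> v $ i $ j = 0"
    using Nmon_support v by (auto simp: Ndelta_def)
  have vinv: "in_GL UNIV v" and phi: "\<And>i j. \<phi> (v $ i $ j) = (v $ i $ j) ^ p"
    using v mem_Gdelta_iff[OF w] by (auto simp: Ndelta_def)
  have p0: "0 < p" using witt_frame_p_gt_1[OF w] by simp
  have "frob_pow p (w ** v) $ i $ j = (frob_pow p w ** mat_map \<phi> v) $ i $ j" for i j
  proof -
    have "(w ** v) $ i $ j = w $ i $ r j * v $ r j $ j"
      unfolding matrix_mult_apply by (rule sum_UNIV_single) (simp add: off)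
    moreover have "(frob_pow p w ** mat_map \<phi> v) $ i $ j = (w $ i $ r j) ^ p * \<phi> (v $ r j $ j)"
      unfolding matrix_mult_apply
      by (subst sum_UNIV_single[where r = "r j"]) (simp_all add: off phi p0 witt_frame_phi_zero[OF w])
    ultimately show ?thesis by (simp add: phi power_mult_distrib)
  qed
  then show ?thesis using vinv by (simp add: Gw_def vec_eq_iff)
qed

definition transvection :: "'n \<Rightarrow> 'n \<Rightarrow> 'a::comm_ring_1 \<Rightarrow> 'a^'n^'n" where
  "transvection a b l = mat 1 + (\<chi> i j. if i = a \<and> j = b then l else 0)"

lemma transvection_apply:
  "transvection a b l $ i $ j = (if i = j then 1 else 0) + (if i = a \<and> j = b then l else 0)"
  by (simp add: transvection_def mat_def)

lemma transvection_mult: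
  fixes l m :: "'a::comm_ring_1"
  assumes "a \<noteq> b"
  shows "transvection a b l ** transvection a b m = (transvection a b (l + m) :: 'a^'n::finite^'n)"
  using assms
  by (simp add: vec_eq_iff matrix_mult_apply transvection_apply distrib_left distrib_right
      sum.distrib if_distrib[of "\<lambda>x. x * _"] if_distrib[of "\<lambda>x. _ * x"] cong: if_cong)

lemma transvection_in_GL:
  assumes "a \<noteq> b"
  shows "in_GL UNIV (transvection a b l :: 'a::comm_ring_1^'n::finite^'n)"
proof -
  have "transvection a b 0 = (mat 1 :: 'a^'n^'n)" by (simp add: transvection_def vec_eq_iff)
  then show ?thesis
    unfolding in_GL_def using transvection_mult[OF assms, of l "- l"] transvection_mult[OF assms, of "- l" l]
    by (metis UNIV_I add.commute add.right_inverse)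
qed

lemma frob_pow_transvection:
  "0 < p \<Longrightarrow> a \<noteq> b \<Longrightarrow> frob_pow p (transvection a b l) = transvection a b (l ^ p)"
  by (simp add: vec_eq_iff transvection_apply power_0_left)

lemma transvection_mult_apply:
  fixes v :: "'a::comm_ring_1^'n::finite^'n"
  shows "(transvection a b l ** v) $ a $ j = v $ a $ j + l * v $ b $ j"
  by (simp add: matrix_mult_apply transvection_apply distrib_right sum.distrib
      if_distrib[of "\<lambda>x. x * _"] cong: if_cong)

lemma Inter_Gw_subset_Ndelta:
  fixes v :: "'a::idom^'n::finite^'n"
  assumes w: "witt_frame p \<phi>" and v: "\<And>w. in_GL UNIV w \<Longrightarrow> v \<in> Gw p \<phi> w"
  shows "v \<in> Ndelta p \<phi>"
proof -
  have p0: "0 < p" using witt_frame_p_gt_1[OF w] by simp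
  have "frob_pow p (mat 1 :: 'a^'n^'n) = mat 1"
    using p0 by (simp add: vec_eq_iff mat_def power_0_left)
  moreover have "v \<in> Gw p \<phi> (mat 1)" using v by (auto simp: in_GL_def)
  ultimately have vinv: "in_GL UNIV v" and frob: "frob_pow p v = mat_map \<phi> v"
    by (simp_all add: Gw_def)
  show ?thesis
  proof (rule Ndelta_if_frobenius_additive[OF w vinv])
    show "\<phi> (v $ i $ j) = (v $ i $ j) ^ p" for i j
      using arg_cong[OF frob, of "\<lambda>M. M $ i $ j"] by simp
    fix a b j :: 'n and l :: 'a assume ab: "a \<noteq> b"
    have "frob_pow p (transvection a b l ** v) = transvection a b (l ^ p) ** frob_pow p v"
      using v[OF transvection_in_GL[OF ab]] by (simp add: Gw_def frob_pow_transvection[OF p0 ab] frob)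
    from arg_cong[OF this, of "\<lambda>M. M $ a $ j"]
    show "(v $ a $ j + l * v $ b $ j) ^ p = (v $ a $ j) ^ p + l ^ p * (v $ b $ j) ^ p"
      by (simp add: transvection_mult_apply)
  qed
qed

lemma Gw_subset_Ndelta_if_CARD_1:
  fixes u c :: "'a::idom^'n::finite^'n"
  assumes w: "witt_frame p \<phi>" and n: "CARD('n) = 1" and u: "in_GL UNIV u"
    and c: "c \<in> Gw p \<phi> u"
  shows "c \<in> Ndelta p \<phi>"
proof -
  have single: "(\<Sum>k\<in>UNIV. f k) = f i" for f :: "'n \<Rightarrow> 'a" and i
    by (rule sum_UNIV_single) (use CARD_1_eq[OF n] in blast)
  have cinv: "in_GL UNIV c" and eq: "frob_pow p (u ** c) = frob_pow p u ** mat_map \<phi> c"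
    using c by (auto simp: Gw_def)
  have "\<phi> (c $ i $ i) = (c $ i $ i) ^ p" for i
  proof -
    obtain j where "u $ i $ j \<noteq> 0" using in_GL_row_nonzero[OF u] by blast
    then have u0: "(u $ i $ i) ^ p \<noteq> 0" using CARD_1_eq[OF n, of i j] by simp
    have "(u $ i $ i) ^ p * (c $ i $ i) ^ p = (u $ i $ i) ^ p * \<phi> (c $ i $ i)"
      using arg_cong[OF eq, of "\<lambda>M. M $ i $ i"]
      by (simp add: matrix_mult_apply single[of _ i] power_mult_distrib)
    then show ?thesis using mult_left_cancel[OF u0] by simp
  qed
  then show ?thesis
    using CARD_1_eq[OF n] by (intro Ndelta_if_frobenius_additive[OF w cinv]) metis+
qed

lemma phi_mat_if_delta_eq:
  assumes w: "witt_frame p \<phi>" and eq: "mat_map (delta p \<phi>) X = \<alpha> ** frob_pow p X"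
  shows "mat_map \<phi> X = frob_pow p X + p_scaled p \<alpha> ** frob_pow p X"
proof -
  have "\<phi> (X $ i $ j) = (X $ i $ j) ^ p + of_nat p * (\<alpha> ** frob_pow p X) $ i $ j" for i j
    using phi_eq_power_plus_delta[OF w, of "X $ i $ j"] arg_cong[OF eq, of "\<lambda>M. M $ i $ j"] by simp
  then show ?thesis by (simp add: vec_eq_iff p_scaled_mult_apply)
qed

section \<open>The differential Galois group of a solution of \<delta>u = \<alpha> u^(p)\<close>

locale delta_linear_solution =
  fixes p :: nat and \<phi> :: "'a::idom \<Rightarrow> 'a" and \<O> :: "'a set" and \<alpha> u :: "'a^'n::finite^'n"
  assumes witt: "witt_frame p \<phi>"
    and delta_subring: "delta_subring p \<phi> \<O>"
    and alpha_in_O: "\<And>i j. \<alpha> $ i $ j \<in> \<O>"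
    and u_in_GL: "in_GL UNIV u"
    and delta_u: "mat_map (delta p \<phi>) u = \<alpha> ** frob_pow p u"
begin

abbreviation Ou :: "'a set" where
  "Ou \<equiv> ring_gen \<O> (entries u)"

lemma subring_O: "is_subring \<O>"
  using delta_subring by (simp add: delta_subring_def)

lemma subring_Ou: "is_subring Ou"
  by (rule subring_ring_gen)

lemma O_subset_Ou: "\<O> \<subseteq> Ou"
  by (rule ring_gen_base_subset)

lemma u_in_Ou: "u $ i $ j \<in> Ou"
  using ring_gen_gens_subset[of "entries u" \<O>] by (auto simp: entries_def)

lemma phi_in_O: "a \<in> \<O> \<Longrightarrow> \<phi> a \<in> \<O>"
  using delta_subring subring_O by (intro subring_phi_closed[OF witt]) (auto simp: delta_subring_def)

lemma p_scaled_alpha_in_O: "p_scaled p \<alpha> $ i $ j \<in> \<O>"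
  using alpha_in_O subring_O by (simp add: p_scaled_def subring_mult subring_of_nat)

lemma delta_in_Ou: "x \<in> Ou \<Longrightarrow> delta p \<phi> x \<in> Ou"
proof -
  have "entries u \<subseteq> {x \<in> Ou. delta p \<phi> x \<in> Ou}"
  proof
    fix y assume "y \<in> entries u"
    then obtain i j where y: "y = u $ i $ j" by (auto simp: entries_def)
    have "(\<alpha> ** frob_pow p u) $ i $ j \<in> Ou"
      using alpha_in_O O_subset_Ou u_in_Ou
      by (intro matrix_mult_in_subring[OF subring_Ou]) (auto intro: subring_power[OF subring_Ou])
    then show "y \<in> {x \<in> Ou. delta p \<phi> x \<in> Ou}"
      using y u_in_Ou arg_cong[OF delta_u, of "\<lambda>M. M $ i $ j"] by simp
  qed
  moreover have "\<O> \<subseteq> {x \<in> Ou. delta p \<phi> x \<in> Ou}"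
    using O_subset_Ou delta_subring by (auto simp: delta_subring_def)
  ultimately have "Ou \<subseteq> {x \<in> Ou. delta p \<phi> x \<in> Ou}"
    by (intro ring_gen_least subring_delta_preimage[OF witt subring_Ou])
  then show "x \<in> Ou \<Longrightarrow> delta p \<phi> x \<in> Ou" by blast
qed

lemma phi_in_Ou: "x \<in> Ou \<Longrightarrow> \<phi> x \<in> Ou"
  by (rule subring_phi_closed[OF witt subring_Ou _ delta_in_Ou])

lemma delta_gen_eq_Ou: "delta_gen p \<phi> \<O> u = Ou"
proof
  have "(delta p \<phi> ^^ k) (u $ i $ j) \<in> Ou" for k i j
    by (induction k) (simp_all add: u_in_Ou delta_in_Ou)
  then show "delta_gen p \<phi> \<O> u \<subseteq> Ou"
    unfolding delta_gen_def by (intro ring_gen_least[OF subring_Ou O_subset_Ou]) (auto simp: entries_def)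
  have "entries u = entries (mat_map (delta p \<phi> ^^ 0) u)" by (simp add: entries_def)
  then have "entries u \<subseteq> (\<Union>k. entries (mat_map (delta p \<phi> ^^ k) u))" by blast
  then show "Ou \<subseteq> delta_gen p \<phi> \<O> u"
    unfolding delta_gen_def
    by (meson ring_gen_least subring_ring_gen ring_gen_base_subset ring_gen_gens_subset subset_trans)
qed

lemma phi_u: "mat_map \<phi> u = frob_pow p u + p_scaled p \<alpha> ** frob_pow p u"
  by (rule phi_mat_if_delta_eq[OF witt delta_u])

context
  fixes \<sigma> and c :: "'a^'n^'n"
  assumes aut: "O_alg_aut \<O> Ou \<sigma>" and sigma_u: "mat_map \<sigma> u = u ** c"
begin

lemma hom_on_sigma: "hom_on Ou \<sigma>"
  using aut by (simp add: O_alg_aut_def hom_on_def)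

lemma sigma_fixes_O: "a \<in> \<O> \<Longrightarrow> \<sigma> a = a"
  using aut by (simp add: O_alg_aut_def)

lemma sigma_one: "\<sigma> 1 = 1"
  using sigma_fixes_O subring_one[OF subring_O] by blast

lemma sigma_in_Ou: "x \<in> Ou \<Longrightarrow> \<sigma> x \<in> Ou"
  using aut by (auto simp: O_alg_aut_def bij_betw_def)

lemma sigma_u_apply: "\<sigma> (u $ i $ j) = (u ** c) $ i $ j"
  using arg_cong[OF sigma_u, of "\<lambda>M. M $ i $ j"] by simp

lemma frob_pow_u_in_Ou: "frob_pow p u $ i $ j \<in> Ou"
  by (simp add: subring_power[OF subring_Ou] u_in_Ou)

lemma sigma_frob_pow_u: "mat_map \<sigma> (frob_pow p u) = frob_pow p (u ** c)"
  by (simp add: vec_eq_iff hom_on_power[OF hom_on_sigma subring_Ou sigma_one u_in_Ou] sigma_u_apply)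

lemma sigma_p_scaled_alpha: "mat_map \<sigma> (p_scaled p \<alpha>) = p_scaled p \<alpha>"
  using sigma_fixes_O p_scaled_alpha_in_O by (simp add: vec_eq_iff)

lemma sigma_phi_u:
  assumes "c \<in> Gw p \<phi> u"
  shows "mat_map \<sigma> (mat_map \<phi> u) = mat_map \<phi> (mat_map \<sigma> u)"
proof -
  have P_in_Ou: "p_scaled p \<alpha> $ i $ j \<in> Ou" for i j
    using p_scaled_alpha_in_O O_subset_Ou by auto
  have "mat_map \<sigma> (mat_map \<phi> u)
      = mat_map \<sigma> (frob_pow p u) + mat_map \<sigma> (p_scaled p \<alpha> ** frob_pow p u)"
    unfolding phi_u
    by (rule mat_map_hom_on_add[OF hom_on_sigma frob_pow_u_in_Ou
          matrix_mult_in_subring[OF subring_Ou P_in_Ou frob_pow_u_in_Ou]])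
  also have "\<dots> = frob_pow p (u ** c) + p_scaled p \<alpha> ** frob_pow p (u ** c)"
    by (simp add: mat_map_hom_on_mult[OF hom_on_sigma subring_Ou P_in_Ou frob_pow_u_in_Ou]
        sigma_frob_pow_u sigma_p_scaled_alpha)
  also have "\<dots> = mat_map \<phi> (mat_map \<sigma> u)"
    using assms
    by (simp add: sigma_u Gw_def mat_map_phi_mult[OF witt] phi_u matrix_add_rdistrib matrix_mul_assoc)
  finally show ?thesis .
qed

lemma sigma_phi_commute:
  assumes "c \<in> Gw p \<phi> u" and x: "x \<in> Ou"
  shows "\<sigma> (\<phi> x) = \<phi> (\<sigma> x)"
proof -
  have "(\<sigma> \<circ> \<phi>) x = (\<phi> \<circ> \<sigma>) x"
  proof (rule hom_on_ring_gen_eqI[OF _ _ _ subring_one[OF subring_O] x])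
    show "hom_on Ou (\<sigma> \<circ> \<phi>)"
      using phi_in_Ou by (intro hom_on_comp hom_on_sigma witt_frame_hom_on[OF witt]) auto
    show "hom_on Ou (\<phi> \<circ> \<sigma>)"
      using sigma_in_Ou by (intro hom_on_comp hom_on_sigma witt_frame_hom_on[OF witt]) auto
    fix y assume "y \<in> \<O> \<union> entries u"
    then show "(\<sigma> \<circ> \<phi>) y = (\<phi> \<circ> \<sigma>) y"
      using sigma_phi_u[OF assms(1)] sigma_fixes_O phi_in_O
      by (auto simp: entries_def vec_eq_iff)
  qed
  then show ?thesis by simp
qed

lemma Gtilde_if_Gw:
  assumes c: "in_GL \<O> c" and G: "c \<in> Gw p \<phi> u"
  shows "\<sigma> \<in> Gtilde p \<phi> \<O> u"
proof -
  have "\<sigma> (delta p \<phi> x) = delta p \<phi> (\<sigma> x)" if x: "x \<in> Ou" for x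
  proof (rule delta_eqI[OF witt, symmetric])
    have "of_nat p * \<sigma> (delta p \<phi> x) = \<sigma> (of_nat p * delta p \<phi> x)"
      using sigma_fixes_O subring_of_nat[OF subring_O] O_subset_Ou x delta_in_Ou
      by (simp add: hom_on_mult[OF hom_on_sigma] subset_iff)
    also have "\<dots> = \<sigma> (\<phi> x) - \<sigma> x ^ p"
      using x phi_in_Ou by (simp add: p_mult_delta[OF witt] hom_on_diff[OF hom_on_sigma subring_Ou]
          hom_on_power[OF hom_on_sigma subring_Ou sigma_one] subring_power[OF subring_Ou])
    finally show "of_nat p * \<sigma> (delta p \<phi> x) = \<phi> (\<sigma> x) - \<sigma> x ^ p"
      using sigma_phi_commute[OF G x] by simp
  qed
  then show ?thesis
    unfolding Gtilde_def delta_gen_eq_Ou using aut sigma_u c by blast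
qed

lemma delta_mult_c_if_commute:
  assumes commute: "\<And>x. x \<in> Ou \<Longrightarrow> \<sigma> (delta p \<phi> x) = delta p \<phi> (\<sigma> x)"
  shows "mat_map (delta p \<phi>) (u ** c) = \<alpha> ** frob_pow p (u ** c)"
proof -
  have "mat_map (delta p \<phi>) (u ** c) = mat_map \<sigma> (mat_map (delta p \<phi>) u)"
    using commute u_in_Ou by (simp add: sigma_u[symmetric] vec_eq_iff)
  also have "\<dots> = mat_map \<sigma> \<alpha> ** mat_map \<sigma> (frob_pow p u)"
    using alpha_in_O O_subset_Ou
    by (auto simp: delta_u intro!: mat_map_hom_on_mult[OF hom_on_sigma subring_Ou _ frob_pow_u_in_Ou])
  also have "mat_map \<sigma> \<alpha> = \<alpha>"
    using sigma_fixes_O alpha_in_O by (simp add: vec_eq_iff)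
  finally show ?thesis by (simp add: sigma_frob_pow_u)
qed

end

lemma Grel_imp_Gw:
  assumes "c \<in> Grel p \<phi> \<O> u"
  shows "c \<in> Gw p \<phi> u" and "in_GL \<O> c"
proof -
  obtain \<sigma> c' where aut: "O_alg_aut \<O> Ou \<sigma>"
    and commute: "\<And>x. x \<in> Ou \<Longrightarrow> \<sigma> (delta p \<phi> x) = delta p \<phi> (\<sigma> x)"
    and sigma_u: "mat_map \<sigma> u = u ** c" and c': "in_GL \<O> c'" "mat_map \<sigma> u = u ** c'"
    using assms by (auto simp: Grel_def Gtilde_def delta_gen_eq_Ou)
  show "in_GL \<O> c"
    using in_GL_mult_left_cancel[OF u_in_GL, of c c'] sigma_u c' by simp
  then have "in_GL UNIV c" by (auto simp: in_GL_def)
  moreover have "frob_pow p (u ** c) = frob_pow p u ** mat_map \<phi> c"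
  proof (rule p_scaled_cancel[OF witt])
    have "mat_map \<phi> (u ** c) = frob_pow p (u ** c) + p_scaled p \<alpha> ** frob_pow p (u ** c)"
      by (rule phi_mat_if_delta_eq[OF witt delta_mult_c_if_commute[OF aut sigma_u commute]])
    moreover have "mat_map \<phi> (u ** c)
        = frob_pow p u ** mat_map \<phi> c + p_scaled p \<alpha> ** (frob_pow p u ** mat_map \<phi> c)"
      by (simp add: mat_map_phi_mult[OF witt] phi_u matrix_add_rdistrib matrix_mul_assoc)
    ultimately show "frob_pow p (u ** c) + p_scaled p \<alpha> ** frob_pow p (u ** c)
        = frob_pow p u ** mat_map \<phi> c + p_scaled p \<alpha> ** (frob_pow p u ** mat_map \<phi> c)"
      by simp
  qed
  ultimately show "c \<in> Gw p \<phi> u" by (simp add: Gw_def)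
qed

lemma Grel_subset_Sigma0: "Grel p \<phi> \<O> u \<subseteq> Sigma0 \<O> u"
proof
  fix c assume c: "c \<in> Grel p \<phi> \<O> u"
  then obtain \<sigma> where "O_alg_aut \<O> Ou \<sigma>" "mat_map \<sigma> u = u ** c"
    by (auto simp: Grel_def Gtilde_def delta_gen_eq_Ou)
  then show "c \<in> Sigma0 \<O> u"
    by (rule automorphism_imp_Sigma0[OF subring_O _ _ Grel_imp_Gw(2)[OF c]])
qed

lemma Grel_if_automorphism_Gw:
  assumes "O_alg_aut \<O> Ou \<sigma>" "mat_map \<sigma> u = u ** c" "in_GL \<O> c" "c \<in> Gw p \<phi> u"
  shows "c \<in> Grel p \<phi> \<O> u"
  using Gtilde_if_Gw[OF assms] assms(2) by (auto simp: Grel_def)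

lemma Ndelta_Sigma0_subset_Grel: "Ndelta p \<phi> \<inter> Sigma0 \<O> u \<subseteq> Grel p \<phi> \<O> u"
proof
  fix c assume c: "c \<in> Ndelta p \<phi> \<inter> Sigma0 \<O> u"
  then have "in_GL \<O> c" by (simp add: Sigma0_def)
  then show "c \<in> Grel p \<phi> \<O> u"
    using c Sigma0_imp_automorphism[OF subring_O] Ndelta_subset_Gw[OF witt]
    by (intro Grel_if_automorphism_Gw) auto
qed

text \<open>The injection vr identifies the columns of u with variables of x, so that one statement
  covers both a single independent row and the independence of all entries.\<close>

lemma Grel_subset_Ndelta_if_alg_indep:
  fixes x :: "'v \<Rightarrow> 'a" and vr :: "'n \<Rightarrow> 'v"
  assumes indep: "alg_indep \<O> x" and vr: "inj vr" and row: "\<And>k. x (vr k) = u $ i $ k"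
  shows "Grel p \<phi> \<O> u \<subseteq> Ndelta p \<phi>"
proof
  fix c assume cG: "c \<in> Grel p \<phi> \<O> u"
  have G: "c \<in> Gw p \<phi> u" and cO: "in_GL \<O> c" using Grel_imp_Gw[OF cG] by auto
  have cinv: "in_GL UNIV c" using cO by (auto simp: in_GL_def)
  have c_in: "c $ k $ j \<in> \<O>" "\<phi> (c $ k $ j) \<in> \<O>" for k j
    using cO phi_in_O by (auto simp: in_GL_def)
  show "c \<in> Ndelta p \<phi>"
  proof (rule Ndelta_if_frobenius_identity[OF witt cinv])
    fix t :: "'n \<Rightarrow> 'a" and j
    define P :: "('v, 'a) mpoly" where
      "P = (\<Sum>k\<in>UNIV. mpX (vr k) * mpC (c $ k $ j)) ^ p - (\<Sum>k\<in>UNIV. mpX (vr k) ^ p * mpC (\<phi> (c $ k $ j)))"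
    have eval: "mpeval P y = (\<Sum>k\<in>UNIV. y (vr k) * c $ k $ j) ^ p - (\<Sum>k\<in>UNIV. y (vr k) ^ p * \<phi> (c $ k $ j))" for y
      by (simp add: P_def mpeval_simps)
    have "mp_over \<O> P"
      unfolding P_def using subring_O c_in
      by (intro mp_over_diff mp_over_power mp_over_sum mp_over_mult mp_over_mpX mp_over_mpC)
    moreover have "mpeval P x = 0"
      using arg_cong[OF G[unfolded Gw_def, THEN CollectD, THEN conjunct2], of "\<lambda>M. M $ i $ j"]
      by (simp add: eval row matrix_mult_apply)
    ultimately have "P = 0" using indep by (auto simp: alg_indep_def)
    then have "mpeval P (t \<circ> inv vr) = 0" by (simp add: mpeval_def)
    then show "(\<Sum>k\<in>UNIV. t k * c $ k $ j) ^ p = (\<Sum>k\<in>UNIV. t k ^ p * \<phi> (c $ k $ j))"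
      by (simp add: eval inv_f_f[OF vr])
  qed
qed

end

theorem lemma3p5:
  fixes p :: nat and \<phi> :: "'a::idom \<Rightarrow> 'a" and \<O> :: "'a set"
    and \<alpha> u :: "'a^'n^'n"
  assumes "witt_frame p \<phi>"
    and "delta_subring p \<phi> \<O>"
    and "\<forall>i j. \<alpha> $ i $ j \<in> \<O>"
    and "in_GL UNIV u"
    and "mat_map (delta p \<phi>) u = \<alpha> ** frob_pow p u"
  shows
   "((\<exists>i. alg_indep \<O> (\<lambda>j. u $ i $ j)) \<longrightarrow>
        Grel p \<phi> \<O> u \<subseteq> Ndelta p \<phi> \<and> Grel p \<phi> \<O> u = Ndelta p \<phi> \<inter> Sigma0 \<O> u)
  \<and> (alg_indep \<O> (\<lambda>(i, j). u $ i $ j) \<longrightarrow> Grel p \<phi> \<O> u = Ndelta p \<phi> \<inter> {c. in_GL \<O> c})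
  \<and> (\<forall>\<sigma> c. O_alg_aut \<O> (ring_gen \<O> (entries u)) \<sigma> \<and> mat_map \<sigma> u = u ** c
        \<and> in_GL \<O> c \<and> c \<in> Gw p \<phi> u \<longrightarrow> c \<in> Grel p \<phi> \<O> u)
  \<and> (CARD('n) = 1 \<longrightarrow> Grel p \<phi> \<O> u \<subseteq> Ndelta p \<phi> \<and> Ndelta p \<phi> = (Gdelta p \<phi> :: ('a^'n^'n) set))
  \<and> (\<Inter>w\<in>{w. in_GL UNIV w}. Gw p \<phi> w) = (Ndelta p \<phi> :: ('a^'n^'n) set)"
proof -
  interpret delta_linear_solution p \<phi> \<O> \<alpha> u
    using assms by unfold_locales auto
  have Grel_eq: "Grel p \<phi> \<O> u = Ndelta p \<phi> \<inter> Sigma0 \<O> u" if "Grel p \<phi> \<O> u \<subseteq> Ndelta p \<phi>"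
    using that Grel_subset_Sigma0 Ndelta_Sigma0_subset_Grel by blast
  have row: "Grel p \<phi> \<O> u \<subseteq> Ndelta p \<phi>" if "alg_indep \<O> (\<lambda>j. u $ i $ j)" for i
    using Grel_subset_Ndelta_if_alg_indep[OF that, of "\<lambda>k. k" i] by (simp add: inj_on_def)
  have all: "Grel p \<phi> \<O> u \<subseteq> Ndelta p \<phi>" if "alg_indep \<O> (\<lambda>(i, j). u $ i $ j)"
    using Grel_subset_Ndelta_if_alg_indep[OF that, of "Pair undefined" undefined] by (simp add: inj_on_def)
  have CARD_1: "Grel p \<phi> \<O> u \<subseteq> Ndelta p \<phi>" if "CARD('n) = 1"
    using Grel_imp_Gw(1) Gw_subset_Ndelta_if_CARD_1[OF witt that u_in_GL] by blast
  have Inter: "(\<Inter>w\<in>{w. in_GL UNIV w}. Gw p \<phi> w) = (Ndelta p \<phi> :: ('a^'n^'n) set)"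
    using Inter_Gw_subset_Ndelta[OF witt] Ndelta_subset_Gw[OF witt] by blast
  show ?thesis
  proof (intro conjI)
    show "(\<exists>i. alg_indep \<O> (\<lambda>j. u $ i $ j)) \<longrightarrow>
        Grel p \<phi> \<O> u \<subseteq> Ndelta p \<phi> \<and> Grel p \<phi> \<O> u = Ndelta p \<phi> \<inter> Sigma0 \<O> u"
      using row Grel_eq by blast
    show "alg_indep \<O> (\<lambda>(i, j). u $ i $ j) \<longrightarrow> Grel p \<phi> \<O> u = Ndelta p \<phi> \<inter> {c. in_GL \<O> c}"
      using all Grel_eq Sigma0_eq_in_GL_if_alg_indep[OF subring_O, of u] by auto
    show "\<forall>\<sigma> c. O_alg_aut \<O> Ou \<sigma> \<and> mat_map \<sigma> u = u ** c \<and> in_GL \<O> c \<and> c \<in> Gw p \<phi> u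
        \<longrightarrow> c \<in> Grel p \<phi> \<O> u"
      using Grel_if_automorphism_Gw by blast
    show "CARD('n) = 1 \<longrightarrow>
        Grel p \<phi> \<O> u \<subseteq> Ndelta p \<phi> \<and> Ndelta p \<phi> = (Gdelta p \<phi> :: ('a^'n^'n) set)"
      using CARD_1 Ndelta_eq_Gdelta_if_CARD_1 by blast
  qed (rule Inter)
qed

end
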